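(* (Soundness) Let $\mathfrak M=(\mathfrak T,\mathcal V)$ be a TFL model and $\phi$ a TFL formula in positive normal form, and let $H_0=(\mathfrak X(s_0),t_\epsilon)$ be the initial process. If $H_0\notin[\![\phi]\!]^{\mathfrak T}_{\mathcal V}$, then Adam has a winning strategy in the model-checking game $\mathcal G(H_0,\phi)$.
   Context: Systems: $\mathfrak T=(S,s_0,T,I,\Sigma)$, a transition system with independence (states $S$, initial $s_0$, labels $\Sigma$, transitions $T\subseteq S\times\Sigma\times S$, irreflexive symmetric independence $I\subseteq T\times T$ satisfying the standard TSI axioms), image-finite. For $t=(s,a,s')$: $\sigma(t)=s,\tau(t)=s',\delta(t)=a$. $t\otimes t'$ iff $\sigma(t)=\sigma(t')\wedge tIt'$; $t\ominus t'$ iff $\tau(t)=\sigma(t')\wedge tIt'$; $t\le t'$ iff $\tau(t)=\sigma(t')\wedge\neg tIt'$. $\mathfrak X(s)$ = transitions with source $s$; conflict-free set = set with common source, pairwise $\otimes$; support sets = the $\mathfrak X(s)$ and non-empty conflict-free sets; $M\sqsubseteq R$ iff $M\subseteq R$ and no $t\in R\setminus M$ has $t\otimes t'$ for all $t'\in M$; $\mathcal X$ = all $\mathfrak X(s)$ and all support sets $M\sqsubseteq\mathfrak X(s)$; $\mathfrak A=T\cup\{t_\epsilon\}$ with fresh $t_\epsilon$, $\tau(t_\epsilon)=s_0$, $t_\epsilon\le t$ whenever $\sigma(t)=s_0$, never $t_\epsilon\ominus t$; processes $\mathfrak S=\mathcal X\times\mathfrak A$. TFL: formulas $\phi::=Z\mid\neg\phi\mid\phi\wedge\phi\mid\langle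 a\rangle_c\phi\mid\langle a\rangle_{nc}\phi\mid\langle\otimes\rangle\phi\mid\mu Z.\phi$ (free occurrences of $Z$ in $\mu Z.\phi$ under an even number of negations), with duals $\vee$, $[a]_c=\neg\langle a\rangle_c\neg$, $[a]_{nc}$, $[\otimes]=\neg\langle\otimes\rangle\neg$, $\nu Z.\phi=\neg\mu Z.\neg\phi[\neg Z/Z]$. A model is $(\mathfrak T,\mathcal V)$ with $\mathcal V:\mathrm{Var}\to2^{\mathfrak S}$. Semantics in $2^{\mathfrak S}$: $[\![Z]\!]=\mathcal V(Z)$, $\neg$ complement, $\wedge$ intersection, $[\![\langle a\rangle_c\phi]\!]=\{(R,t):\exists r\in R.\ \delta(r)=a,\ t\le r,\ (\mathfrak X(\tau(r)),r)\in[\![\phi]\!]\}$, $\langle a\rangle_{nc}$ likewise with $t\ominus r$, $[\![\langle\otimes\rangle\phi]\!]=\{(R,t):\exists M\in\mathcal X.\ M\sqsubseteq R,\ (M,t)\in[\![\phi]\!]\}$, $[\![\mu Z.\phi]\!]_{\mathcal V}=\bigcap\{Q\subseteq\mathfrak S:[\![\phi]\!]_{\mathcal V[Z:=Q]}\subseteq Q\}$. Positive normal form: negation only on variables, no two binders bind the same variable. $Sub(\phi)$ is the set of subformulas. Model-checking game $\mathcal G(H_0,\phi)$ between Eve and Adam: configurations $H\vdash\psi$ with $H\in\mathfrak S$, $\psi\in Sub(\phi)$; start $H_0\vdash\phi$. Rules: $H\vdash\mu Z.\psi$ or $H\vdash\nu Z.\psi$ moves to $H\vdash Z$; $H\vdash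 Z$ with $Z$ bound by $\mu Z.\psi$ or $\nu Z.\psi$ moves to $H\vdash\psi$; at $H\vdash\psi_0\vee\psi_1$ Eve (at $\wedge$, Adam) chooses $H\vdash\psi_i$; at $(R,t)\vdash\langle a\rangle_c\psi$ Eve (at $[a]_c\psi$, Adam) chooses $r\in R$ with $\delta(r)=a$, $t\le r$, moving to $(\mathfrak X(\tau(r)),r)\vdash\psi$; same for $\langle a\rangle_{nc}$/$[a]_{nc}$ with $t\ominus r$; at $(R,t)\vdash\langle\otimes\rangle\psi$ Eve (at $[\otimes]\psi$, Adam) chooses $M\in\mathcal X$ with $M\sqsubseteq R$, moving to $(M,t)\vdash\psi$. Adam wins a play iff it ends at $H\vdash Z$ ($Z$ free) with $H\notin\mathcal V(Z)$, or at a diamond configuration ($\langle a\rangle_c$, $\langle a\rangle_{nc}$, $\langle\otimes\rangle$) with no available choice, or is infinite and the syntactically outermost variable occurring infinitely often is bound by a $\mu$; Eve wins dually (ends at $H\vdash Z$ with $H\in\mathcal V(Z)$, at a box configuration with no available choice, or infinite with the outermost infinitely-often variable bound by a $\nu$). A player has a winning strategy if she/he can guarantee winning every play. *)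

theory Defs
  imports Main
begin

type_synonym ('s,'a) tr = "'s \<times> 'a \<times> 's"

record ('s,'a) tsi =
  St   :: "'s set"
  init :: "'s"
  Tr   :: "('s,'a) tr set"
  Ind  :: "(('s,'a) tr \<times> ('s,'a) tr) set"
  Lab  :: "'a set"

definition src :: "('s,'a) tr \<Rightarrow> 's" where "src t = fst t"
definition tgt :: "('s,'a) tr \<Rightarrow> 's" where "tgt t = snd (snd t)"
definition lbl :: "('s,'a) tr \<Rightarrow> 'a" where "lbl t = fst (snd t)"

definition diam_step :: "('s,'a,'x) tsi_scheme \<Rightarrow> ('s,'a) tr \<Rightarrow> ('s,'a) tr \<Rightarrow> bool" where
  "diam_step TS e e' \<longleftrightarrow> (\<exists>s a s1 s2 u b. e = (s,a,s1) \<and> e' = (s2,a,u) \<and>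
      ((s,a,s1),(s,b,s2)) \<in> Ind TS \<and> ((s,a,s1),(s1,b,u)) \<in> Ind TS \<and> ((s,b,s2),(s2,a,u)) \<in> Ind TS)"

definition diam_equiv :: "('s,'a,'x) tsi_scheme \<Rightarrow> ('s,'a) tr \<Rightarrow> ('s,'a) tr \<Rightarrow> bool" where
  "diam_equiv TS = (\<lambda>e e'. (e, e') \<in> ({(x,y). diam_step TS x y} \<union> {(x,y). diam_step TS y x})\<^sup>*)"

definition is_tsi :: "('s,'a,'x) tsi_scheme \<Rightarrow> bool" where
  "is_tsi TS \<longleftrightarrow>
     init TS \<in> St TS \<and>
     Tr TS \<subseteq> St TS \<times> Lab TS \<times> St TS \<and>
     Ind TS \<subseteq> Tr TS \<times> Tr TS \<and>
     irrefl (Ind TS) \<and> sym (Ind TS) \<and>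
     (\<forall>s a s1 s2. diam_equiv TS (s,a,s1) (s,a,s2) \<longrightarrow> s1 = s2) \<and>
     (\<forall>s a s1 b s2. ((s,a,s1),(s,b,s2)) \<in> Ind TS \<longrightarrow>
        (\<exists>u. ((s,a,s1),(s1,b,u)) \<in> Ind TS \<and> ((s,b,s2),(s2,a,u)) \<in> Ind TS)) \<and>
     (\<forall>s a s1 b u. ((s,a,s1),(s1,b,u)) \<in> Ind TS \<longrightarrow>
        (\<exists>s2. ((s,a,s1),(s,b,s2)) \<in> Ind TS \<and> ((s,b,s2),(s2,a,u)) \<in> Ind TS)) \<and>
     (\<forall>e e' w. diam_equiv TS e e' \<and> (e', w) \<in> Ind TS \<longrightarrow> (e, w) \<in> Ind TS)"

definition outs :: "('s,'a,'x) tsi_scheme \<Rightarrow> 's \<Rightarrow> ('s,'a) tr set" where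
  "outs TS s = {t \<in> Tr TS. src t = s}"

definition image_finite :: "('s,'a,'x) tsi_scheme \<Rightarrow> bool" where
  "image_finite TS \<longleftrightarrow> (\<forall>s \<in> St TS. finite (outs TS s))"

section \<open>Relations on transitions; \<open>None\<close> plays the role of \<open>t_\<epsilon>\<close>\<close>

definition otimes :: "('s,'a,'x) tsi_scheme \<Rightarrow> ('s,'a) tr \<Rightarrow> ('s,'a) tr \<Rightarrow> bool" where
  "otimes TS t t' \<longleftrightarrow> src t = src t' \<and> (t, t') \<in> Ind TS"

definition tgt_opt :: "('s,'a,'x) tsi_scheme \<Rightarrow> ('s,'a) tr option \<Rightarrow> 's" where
  "tgt_opt TS t = (case t of None \<Rightarrow> init TS | Some t' \<Rightarrow> tgt t')"

definition cle :: "('s,'a,'x) tsi_scheme \<Rightarrow> ('s,'a) tr option \<Rightarrow> ('s,'a) tr \<Rightarrow> bool" where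
  "cle TS t r = (case t of None \<Rightarrow> src r = init TS
                         | Some t' \<Rightarrow> tgt t' = src r \<and> (t', r) \<notin> Ind TS)"

definition ominus :: "('s,'a,'x) tsi_scheme \<Rightarrow> ('s,'a) tr option \<Rightarrow> ('s,'a) tr \<Rightarrow> bool" where
  "ominus TS t r = (case t of None \<Rightarrow> False
                            | Some t' \<Rightarrow> tgt t' = src r \<and> (t', r) \<in> Ind TS)"

definition conflict_free :: "('s,'a,'x) tsi_scheme \<Rightarrow> ('s,'a) tr set \<Rightarrow> bool" where
  "conflict_free TS M \<longleftrightarrow> M \<subseteq> Tr TS \<and> (\<exists>s. \<forall>t\<in>M. src t = s) \<and>
      (\<forall>t\<in>M. \<forall>t'\<in>M. t \<noteq> t' \<longrightarrow> otimes TS t t')"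

definition support_set :: "('s,'a,'x) tsi_scheme \<Rightarrow> ('s,'a) tr set \<Rightarrow> bool" where
  "support_set TS M \<longleftrightarrow> (\<exists>s\<in>St TS. M = outs TS s) \<or> (M \<noteq> {} \<and> conflict_free TS M)"

definition sqsub :: "('s,'a,'x) tsi_scheme \<Rightarrow> ('s,'a) tr set \<Rightarrow> ('s,'a) tr set \<Rightarrow> bool" where
  "sqsub TS M R \<longleftrightarrow> M \<subseteq> R \<and> \<not> (\<exists>t \<in> R - M. \<forall>t'\<in>M. otimes TS t t')"

definition XX :: "('s,'a,'x) tsi_scheme \<Rightarrow> ('s,'a) tr set set" where
  "XX TS = {outs TS s | s. s \<in> St TS} \<union>
           {M. support_set TS M \<and> (\<exists>s\<in>St TS. sqsub TS M (outs TS s))}"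

definition AA :: "('s,'a,'x) tsi_scheme \<Rightarrow> ('s,'a) tr option set" where
  "AA TS = Some ` Tr TS \<union> {None}"

type_synonym ('s,'a) proc = "('s,'a) tr set \<times> ('s,'a) tr option"

definition procs :: "('s,'a,'x) tsi_scheme \<Rightarrow> ('s,'a) proc set" where
  "procs TS = XX TS \<times> AA TS"

definition init_proc :: "('s,'a,'x) tsi_scheme \<Rightarrow> ('s,'a) proc" where
  "init_proc TS = (outs TS (init TS), None)"

datatype ('a,'v) tfl =
    FVar 'v
  | FNeg "('a,'v) tfl"
  | FConj "('a,'v) tfl" "('a,'v) tfl"
  | FDisj "('a,'v) tfl" "('a,'v) tfl"
  | DiaC 'a "('a,'v) tfl"
  | BoxC 'a "('a,'v) tfl"
  | DiaNC 'a "('a,'v) tfl"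
  | BoxNC 'a "('a,'v) tfl"
  | DiaOt "('a,'v) tfl"
  | BoxOt "('a,'v) tfl"
  | Mu 'v "('a,'v) tfl"
  | Nu 'v "('a,'v) tfl"

text \<open>Dual connectives are given the semantics of their defining abbreviations
  (\<open>\<nu>Z.\<phi> = \<not>\<mu>Z.\<not>\<phi>[\<not>Z/Z]\<close>, with \<open>[\<not>Z/Z]\<close> realised semantically by complementing
  the valuation of \<open>Z\<close>).\<close>
fun sem :: "('s,'a,'x) tsi_scheme \<Rightarrow> ('v \<Rightarrow> ('s,'a) proc set) \<Rightarrow> ('a,'v) tfl \<Rightarrow> ('s,'a) proc set" where
  "sem TS V (FVar Z) = V Z"
| "sem TS V (FNeg \<phi>) = procs TS - sem TS V \<phi>"
| "sem TS V (FConj \<phi> \<psi>) = sem TS V \<phi> \<inter> sem TS V \<psi>"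
| "sem TS V (FDisj \<phi> \<psi>) = procs TS - ((procs TS - sem TS V \<phi>) \<inter> (procs TS - sem TS V \<psi>))"
| "sem TS V (DiaC a \<phi>) = {(R,t) \<in> procs TS. \<exists>r\<in>R. lbl r = a \<and> cle TS t r \<and>
        (outs TS (tgt r), Some r) \<in> sem TS V \<phi>}"
| "sem TS V (BoxC a \<phi>) = procs TS - {(R,t) \<in> procs TS. \<exists>r\<in>R. lbl r = a \<and> cle TS t r \<and>
        (outs TS (tgt r), Some r) \<in> procs TS - sem TS V \<phi>}"
| "sem TS V (DiaNC a \<phi>) = {(R,t) \<in> procs TS. \<exists>r\<in>R. lbl r = a \<and> ominus TS t r \<and>
        (outs TS (tgt r), Some r) \<in> sem TS V \<phi>}"
| "sem TS V (BoxNC a \<phi>) = procs TS - {(R,t) \<in> procs TS. \<exists>r\<in>R. lbl r = a \<and> ominus TS t r \<and>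
        (outs TS (tgt r), Some r) \<in> procs TS - sem TS V \<phi>}"
| "sem TS V (DiaOt \<phi>) = {(R,t) \<in> procs TS. \<exists>M\<in>XX TS. sqsub TS M R \<and> (M,t) \<in> sem TS V \<phi>}"
| "sem TS V (BoxOt \<phi>) = procs TS - {(R,t) \<in> procs TS. \<exists>M\<in>XX TS. sqsub TS M R \<and>
        (M,t) \<in> procs TS - sem TS V \<phi>}"
| "sem TS V (Mu Z \<phi>) = \<Inter>{Q. Q \<subseteq> procs TS \<and> sem TS (V(Z := Q)) \<phi> \<subseteq> Q}"
| "sem TS V (Nu Z \<phi>) = procs TS -
        \<Inter>{Q. Q \<subseteq> procs TS \<and> procs TS - sem TS (V(Z := procs TS - Q)) \<phi> \<subseteq> Q}"

fun sub :: "('a,'v) tfl \<Rightarrow> ('a,'v) tfl set" where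
  "sub (FVar Z) = {FVar Z}"
| "sub (FNeg \<phi>) = insert (FNeg \<phi>) (sub \<phi>)"
| "sub (FConj \<phi> \<psi>) = insert (FConj \<phi> \<psi>) (sub \<phi> \<union> sub \<psi>)"
| "sub (FDisj \<phi> \<psi>) = insert (FDisj \<phi> \<psi>) (sub \<phi> \<union> sub \<psi>)"
| "sub (DiaC a \<phi>) = insert (DiaC a \<phi>) (sub \<phi>)"
| "sub (BoxC a \<phi>) = insert (BoxC a \<phi>) (sub \<phi>)"
| "sub (DiaNC a \<phi>) = insert (DiaNC a \<phi>) (sub \<phi>)"
| "sub (BoxNC a \<phi>) = insert (BoxNC a \<phi>) (sub \<phi>)"
| "sub (DiaOt \<phi>) = insert (DiaOt \<phi>) (sub \<phi>)"
| "sub (BoxOt \<phi>) = insert (BoxOt \<phi>) (sub \<phi>)"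
| "sub (Mu Z \<phi>) = insert (Mu Z \<phi>) (sub \<phi>)"
| "sub (Nu Z \<phi>) = insert (Nu Z \<phi>) (sub \<phi>)"

text \<open>Bound variables, listed with multiplicity (one entry per binder).\<close>
fun bvars :: "('a,'v) tfl \<Rightarrow> 'v list" where
  "bvars (FVar Z) = []"
| "bvars (FNeg \<phi>) = bvars \<phi>"
| "bvars (FConj \<phi> \<psi>) = bvars \<phi> @ bvars \<psi>"
| "bvars (FDisj \<phi> \<psi>) = bvars \<phi> @ bvars \<psi>"
| "bvars (DiaC a \<phi>) = bvars \<phi>"
| "bvars (BoxC a \<phi>) = bvars \<phi>"
| "bvars (DiaNC a \<phi>) = bvars \<phi>"
| "bvars (BoxNC a \<phi>) = bvars \<phi>"
| "bvars (DiaOt \<phi>) = bvars \<phi>"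
| "bvars (BoxOt \<phi>) = bvars \<phi>"
| "bvars (Mu Z \<phi>) = Z # bvars \<phi>"
| "bvars (Nu Z \<phi>) = Z # bvars \<phi>"

fun fvars :: "('a,'v) tfl \<Rightarrow> 'v set" where
  "fvars (FVar Z) = {Z}"
| "fvars (FNeg \<phi>) = fvars \<phi>"
| "fvars (FConj \<phi> \<psi>) = fvars \<phi> \<union> fvars \<psi>"
| "fvars (FDisj \<phi> \<psi>) = fvars \<phi> \<union> fvars \<psi>"
| "fvars (DiaC a \<phi>) = fvars \<phi>"
| "fvars (BoxC a \<phi>) = fvars \<phi>"
| "fvars (DiaNC a \<phi>) = fvars \<phi>"
| "fvars (BoxNC a \<phi>) = fvars \<phi>"
| "fvars (DiaOt \<phi>) = fvars \<phi>"
| "fvars (BoxOt \<phi>) = fvars \<phi>"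
| "fvars (Mu Z \<phi>) = fvars \<phi> - {Z}"
| "fvars (Nu Z \<phi>) = fvars \<phi> - {Z}"

definition pnf :: "('a,'v) tfl \<Rightarrow> bool" where
  "pnf \<phi> \<longleftrightarrow>
     (\<forall>\<psi>. FNeg \<psi> \<in> sub \<phi> \<longrightarrow> (\<exists>Z. \<psi> = FVar Z)) \<and>
     distinct (bvars \<phi>) \<and>
     fvars \<phi> \<inter> set (bvars \<phi>) = {} \<and>
     (\<forall>Z \<psi>. (Mu Z \<psi> \<in> sub \<phi> \<or> Nu Z \<psi> \<in> sub \<phi>) \<longrightarrow> FNeg (FVar Z) \<notin> sub \<psi>)"

type_synonym ('s,'a,'v) pos = "('s,'a) proc \<times> ('a,'v) tfl"

fun moves :: "('s,'a,'x) tsi_scheme \<Rightarrow> ('a,'v) tfl \<Rightarrow> ('s,'a,'v) pos \<Rightarrow> ('s,'a,'v) pos set" where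
  "moves TS \<phi> (H, FVar Z) = {(H, \<beta>) | \<beta>. Mu Z \<beta> \<in> sub \<phi> \<or> Nu Z \<beta> \<in> sub \<phi>}"
| "moves TS \<phi> (H, FNeg \<psi>) = {}"
| "moves TS \<phi> (H, FConj \<psi>1 \<psi>2) = {(H, \<psi>1), (H, \<psi>2)}"
| "moves TS \<phi> (H, FDisj \<psi>1 \<psi>2) = {(H, \<psi>1), (H, \<psi>2)}"
| "moves TS \<phi> ((R,t), DiaC a \<psi>) =
     {((outs TS (tgt r), Some r), \<psi>) | r. r \<in> R \<and> lbl r = a \<and> cle TS t r}"
| "moves TS \<phi> ((R,t), BoxC a \<psi>) =
     {((outs TS (tgt r), Some r), \<psi>) | r. r \<in> R \<and> lbl r = a \<and> cle TS t r}"
| "moves TS \<phi> ((R,t), DiaNC a \<psi>) =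
     {((outs TS (tgt r), Some r), \<psi>) | r. r \<in> R \<and> lbl r = a \<and> ominus TS t r}"
| "moves TS \<phi> ((R,t), BoxNC a \<psi>) =
     {((outs TS (tgt r), Some r), \<psi>) | r. r \<in> R \<and> lbl r = a \<and> ominus TS t r}"
| "moves TS \<phi> ((R,t), DiaOt \<psi>) = {((M, t), \<psi>) | M. M \<in> XX TS \<and> sqsub TS M R}"
| "moves TS \<phi> ((R,t), BoxOt \<psi>) = {((M, t), \<psi>) | M. M \<in> XX TS \<and> sqsub TS M R}"
| "moves TS \<phi> (H, Mu Z \<psi>) = {(H, FVar Z)}"
| "moves TS \<phi> (H, Nu Z \<psi>) = {(H, FVar Z)}"

fun adam_pos :: "('s,'a,'v) pos \<Rightarrow> bool" where
  "adam_pos (H, FConj _ _) = True"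
| "adam_pos (H, BoxC _ _) = True"
| "adam_pos (H, BoxNC _ _) = True"
| "adam_pos (H, BoxOt _) = True"
| "adam_pos _ = False"

fun adam_wins_end :: "('v \<Rightarrow> ('s,'a) proc set) \<Rightarrow> ('s,'a,'v) pos \<Rightarrow> bool" where
  "adam_wins_end V (H, FVar Z) = (H \<notin> V Z)"
| "adam_wins_end V (H, FNeg (FVar Z)) = (H \<in> V Z)"
| "adam_wins_end V (H, DiaC _ _) = True"
| "adam_wins_end V (H, DiaNC _ _) = True"
| "adam_wins_end V (H, DiaOt _) = True"
| "adam_wins_end V _ = False"

text \<open>Adam wins an infinite play iff the syntactically outermost variable occurring
  infinitely often (the one whose binder contains the binders of all the others)
  is bound by a \<open>\<mu>\<close>.\<close>
definition inf_vars :: "(nat \<Rightarrow> ('s,'a,'v) pos) \<Rightarrow> 'v set" where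
  "inf_vars p = {Z. infinite {i. snd (p i) = FVar Z}}"

definition adam_wins_inf :: "('a,'v) tfl \<Rightarrow> (nat \<Rightarrow> ('s,'a,'v) pos) \<Rightarrow> bool" where
  "adam_wins_inf \<phi> p \<longleftrightarrow>
     (\<exists>Z \<psi>. Z \<in> inf_vars p \<and> Mu Z \<psi> \<in> sub \<phi> \<and>
        (\<forall>Z' \<in> inf_vars p. \<exists>\<psi>'. Mu Z' \<psi>' \<in> sub (Mu Z \<psi>) \<or> Nu Z' \<psi>' \<in> sub (Mu Z \<psi>)))"

definition adam_strategy ::
  "('s,'a,'x) tsi_scheme \<Rightarrow> ('a,'v) tfl \<Rightarrow> (('s,'a,'v) pos list \<Rightarrow> ('s,'a,'v) pos) \<Rightarrow> bool" where
  "adam_strategy TS \<phi> \<sigma> \<longleftrightarrow>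
     (\<forall>h. h \<noteq> [] \<and> adam_pos (last h) \<and> moves TS \<phi> (last h) \<noteq> {} \<longrightarrow>
          \<sigma> h \<in> moves TS \<phi> (last h))"

definition finite_play ::
  "('s,'a,'x) tsi_scheme \<Rightarrow> ('s,'a) proc \<Rightarrow> ('a,'v) tfl \<Rightarrow>
   (('s,'a,'v) pos list \<Rightarrow> ('s,'a,'v) pos) \<Rightarrow> ('s,'a,'v) pos list \<Rightarrow> bool" where
  "finite_play TS H0 \<phi> \<sigma> ps \<longleftrightarrow>
     ps \<noteq> [] \<and> hd ps = (H0, \<phi>) \<and>
     (\<forall>i. Suc i < length ps \<longrightarrow>
        ps ! Suc i \<in> moves TS \<phi> (ps ! i) \<and>
        (adam_pos (ps ! i) \<longrightarrow> ps ! Suc i = \<sigma> (take (Suc i) ps))) \<and>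
     moves TS \<phi> (last ps) = {}"

definition infinite_play ::
  "('s,'a,'x) tsi_scheme \<Rightarrow> ('s,'a) proc \<Rightarrow> ('a,'v) tfl \<Rightarrow>
   (('s,'a,'v) pos list \<Rightarrow> ('s,'a,'v) pos) \<Rightarrow> (nat \<Rightarrow> ('s,'a,'v) pos) \<Rightarrow> bool" where
  "infinite_play TS H0 \<phi> \<sigma> p \<longleftrightarrow>
     p 0 = (H0, \<phi>) \<and>
     (\<forall>i. p (Suc i) \<in> moves TS \<phi> (p i) \<and>
        (adam_pos (p i) \<longrightarrow> p (Suc i) = \<sigma> (map p [0..<Suc i])))"

definition adam_has_winning_strategy ::
  "('s,'a,'x) tsi_scheme \<Rightarrow> ('v \<Rightarrow> ('s,'a) proc set) \<Rightarrow> ('s,'a) proc \<Rightarrow> ('a,'v) tfl \<Rightarrow> bool" where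
  "adam_has_winning_strategy TS V H0 \<phi> \<longleftrightarrow>
     (\<exists>\<sigma>. adam_strategy TS \<phi> \<sigma> \<and>
        (\<forall>ps. finite_play TS H0 \<phi> \<sigma> ps \<longrightarrow> adam_wins_end V (last ps)) \<and>
        (\<forall>p. infinite_play TS H0 \<phi> \<sigma> p \<longrightarrow> adam_wins_inf \<phi> p))"

end

theory Submission
  imports Defs
begin

text \<open>Adam's strategy is built by induction on subformulas, for every valuation \<open>V'\<close>
  that agrees with \<open>V\<close> off the bound variables: from a position \<open>(H, \<psi>)\<close> with \<open>H\<close>
  outside the denotation of \<open>\<psi>\<close> under \<open>V'\<close>, Adam forces every play either to leave \<open>\<psi>\<close>
  through a free variable \<open>Y\<close> at a process outside \<open>V' Y\<close>, or to stay inside \<open>\<psi>\<close> and be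
  won by him. For connectives this is a one-step reading of the semantics. At \<open>\<mu>Z.\<psi>\<close>
  with denotation \<open>L\<close>, Adam plays the strategy for the body under \<open>Z \<mapsto> L\<close> and restarts
  it at every return to \<open>Z\<close>; as \<open>L\<close> is a pre-fixed point every return happens outside
  \<open>L\<close>, and if there are infinitely many, \<open>Z\<close> is the outermost variable seen infinitely
  often. At \<open>\<nu>Z.\<psi>\<close> the processes from which Adam wins at \<open>Z\<close> form a pre-fixed point of
  the functional whose least fixed point is the complement of \<open>\<nu>Z.\<psi>\<close>, so they contain
  that complement and no ordinal ranks are needed.\<close>

abbreviation binds :: "('a,'v) tfl \<Rightarrow> 'v \<Rightarrow> ('a,'v) tfl \<Rightarrow> bool" where
  "binds \<chi> Z \<beta> \<equiv> Mu Z \<beta> \<in> sub \<chi> \<or> Nu Z \<beta> \<in> sub \<chi>"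

lemma sub_refl [simp]: "\<psi> \<in> sub \<psi>"
  by (cases \<psi>) auto

lemma sub_trans: "\<chi> \<in> sub \<psi> \<Longrightarrow> \<psi> \<in> sub \<phi> \<Longrightarrow> \<chi> \<in> sub \<phi>"
  by (induction \<phi>) auto

lemma set_bvars_sub: "\<psi> \<in> sub \<phi> \<Longrightarrow> set (bvars \<psi>) \<subseteq> set (bvars \<phi>)"
  by (induction \<phi>) auto

lemma distinct_bvars_sub: "\<psi> \<in> sub \<phi> \<Longrightarrow> distinct (bvars \<phi>) \<Longrightarrow> distinct (bvars \<psi>)"
  by (induction \<phi>) auto

lemma binds_in_bvars: "binds \<chi> Y \<beta> \<Longrightarrow> Y \<in> set (bvars \<chi>)"
  using set_bvars_sub by fastforce

lemma in_bvars_binds: "Y \<in> set (bvars \<chi>) \<Longrightarrow> \<exists>\<beta>. binds \<chi> Y \<beta>"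
  by (induction \<chi>) auto

lemma binds_unique: "distinct (bvars \<chi>) \<Longrightarrow> binds \<chi> Z \<beta> \<Longrightarrow> binds \<chi> Z \<beta>' \<Longrightarrow> \<beta> = \<beta>'"
proof (induction \<chi>)
  case (FConj a b) then show ?case using binds_in_bvars[of Z _ a] binds_in_bvars[of Z _ b] by auto
next
  case (FDisj a b) then show ?case using binds_in_bvars[of Z _ a] binds_in_bvars[of Z _ b] by auto
next
  case (Mu Y c) then show ?case using binds_in_bvars[of Z _ c] by auto
next
  case (Nu Y c) then show ?case using binds_in_bvars[of Z _ c] by auto
qed auto

lemma fvars_sub_free_or_bound:
  "\<chi>' \<in> sub \<chi> \<Longrightarrow> Y \<in> fvars \<chi>' \<Longrightarrow> Y \<in> fvars \<chi> \<or> (\<exists>\<beta>. binds \<chi> Y \<beta> \<and> \<chi>' \<in> sub \<beta>)"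
proof (induction \<chi>)
  case (Mu X c) then show ?case by (cases "Y = X") auto
next
  case (Nu X c) then show ?case by (cases "Y = X") auto
qed auto

text \<open>Negations and fixpoint binders deliberately get no operands: the game treats them
  separately.\<close>
fun operands :: "('a,'v) tfl \<Rightarrow> ('a,'v) tfl set" where
  "operands (FConj \<psi>1 \<psi>2) = {\<psi>1, \<psi>2}"
| "operands (FDisj \<psi>1 \<psi>2) = {\<psi>1, \<psi>2}"
| "operands (DiaC _ \<psi>) = {\<psi>}"
| "operands (BoxC _ \<psi>) = {\<psi>}"
| "operands (DiaNC _ \<psi>) = {\<psi>}"
| "operands (BoxNC _ \<psi>) = {\<psi>}"
| "operands (DiaOt \<psi>) = {\<psi>}"
| "operands (BoxOt \<psi>) = {\<psi>}"
| "operands _ = {}"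

lemma operands_sub: "\<psi> \<in> operands \<chi> \<Longrightarrow> \<psi> \<in> sub \<chi>"
  by (cases \<chi>) auto

lemma size_operands: "\<psi> \<in> operands \<chi> \<Longrightarrow> size \<psi> < size \<chi>"
  by (cases \<chi>) auto

lemma fvars_operands: "\<psi> \<in> operands \<chi> \<Longrightarrow> fvars \<psi> \<subseteq> fvars \<chi>"
  by (cases \<chi>) auto

lemma sem_subset_procs: "\<forall>Y. V Y \<subseteq> procs TS \<Longrightarrow> sem TS V \<chi> \<subseteq> procs TS"
proof (induction \<chi> arbitrary: V)
  case (Mu Z c)
  have "sem TS (V(Z := procs TS)) c \<subseteq> procs TS" by (rule Mu.IH) (use Mu.prems in auto)
  then show ?case by (auto intro: Inter_lower)
qed auto

lemma sem_mono:
  assumes "\<forall>Y. V1 Y \<subseteq> V2 Y"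
    and "\<forall>\<chi>. FNeg \<chi> \<in> sub \<psi> \<longrightarrow> (\<exists>Y. \<chi> = FVar Y \<and> V1 Y = V2 Y)"
  shows "sem TS V1 \<psi> \<subseteq> sem TS V2 \<psi>"
  using assms
proof (induction \<psi> arbitrary: V1 V2)
  case (FNeg c)
  then show ?case by fastforce
next
  case (FConj a b)
  have "sem TS V1 a \<subseteq> sem TS V2 a" "sem TS V1 b \<subseteq> sem TS V2 b"
    by (rule FConj.IH; use FConj.prems in auto)+
  then show ?case by auto
next
  case (FDisj a b)
  have "sem TS V1 a \<subseteq> sem TS V2 a" "sem TS V1 b \<subseteq> sem TS V2 b"
    by (rule FDisj.IH; use FDisj.prems in auto)+
  then show ?case by auto
next
  case (DiaC l c)
  have "sem TS V1 c \<subseteq> sem TS V2 c" by (rule DiaC.IH; use DiaC.prems in auto)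
  then show ?case by (simp only: sem.simps) blast
next
  case (BoxC l c)
  have "sem TS V1 c \<subseteq> sem TS V2 c" by (rule BoxC.IH; use BoxC.prems in auto)
  then show ?case by (simp only: sem.simps) blast
next
  case (DiaNC l c)
  have "sem TS V1 c \<subseteq> sem TS V2 c" by (rule DiaNC.IH; use DiaNC.prems in auto)
  then show ?case by (simp only: sem.simps) blast
next
  case (BoxNC l c)
  have "sem TS V1 c \<subseteq> sem TS V2 c" by (rule BoxNC.IH; use BoxNC.prems in auto)
  then show ?case by (simp only: sem.simps) blast
next
  case (DiaOt c)
  have "sem TS V1 c \<subseteq> sem TS V2 c" by (rule DiaOt.IH; use DiaOt.prems in auto)
  then show ?case by (simp only: sem.simps) blast
next
  case (BoxOt c)
  have "sem TS V1 c \<subseteq> sem TS V2 c" by (rule BoxOt.IH; use BoxOt.prems in auto)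
  then show ?case by (simp only: sem.simps) blast
next
  case (Mu Z c)
  have "\<And>Q. sem TS (V1(Z := Q)) c \<subseteq> sem TS (V2(Z := Q)) c"
    by (rule Mu.IH; use Mu.prems in auto)
  then show ?case unfolding sem.simps by (intro Inter_anti_mono) blast
next
  case (Nu Z c)
  have "\<And>Q. sem TS (V1(Z := Q)) c \<subseteq> sem TS (V2(Z := Q)) c"
    by (rule Nu.IH; use Nu.prems in auto)
  then show ?case unfolding sem.simps by (intro Diff_mono order_refl Inter_anti_mono) blast
qed auto

lemma sem_Mu_prefixed:
  assumes "\<forall>\<chi>. FNeg \<chi> \<in> sub \<psi> \<longrightarrow> (\<exists>Y. \<chi> = FVar Y)" and "FNeg (FVar Z) \<notin> sub \<psi>"
  shows "sem TS (V(Z := sem TS V (Mu Z \<psi>))) \<psi> \<subseteq> sem TS V (Mu Z \<psi>)"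
proof -
  let ?L = "sem TS V (Mu Z \<psi>)"
  have "sem TS (V(Z := ?L)) \<psi> \<subseteq> Q" if "Q \<subseteq> procs TS" "sem TS (V(Z := Q)) \<psi> \<subseteq> Q" for Q
  proof -
    have "?L \<subseteq> Q" using that by auto
    then have "sem TS (V(Z := ?L)) \<psi> \<subseteq> sem TS (V(Z := Q)) \<psi>"
      by (intro sem_mono) (use assms in auto)
    with that(2) show ?thesis by blast
  qed
  then show ?thesis by (subst (2) sem.simps) blast
qed

lemma sem_Nu_complement_least:
  assumes "H \<in> procs TS" "H \<notin> sem TS V (Nu Z \<psi>)"
    and "W \<subseteq> procs TS" "procs TS - sem TS (V(Z := procs TS - W)) \<psi> \<subseteq> W"
  shows "H \<in> W"
proof -
  have "H \<in> \<Inter>{Q. Q \<subseteq> procs TS \<and> procs TS - sem TS (V(Z := procs TS - Q)) \<psi> \<subseteq> Q}"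
    using assms(1,2) by simp
  then show ?thesis using assms(3,4) by blast
qed

lemma finite_shift_iff: "finite {i::nat. P (i + k)} \<longleftrightarrow> finite {i. P i}"
  using eventually_sequentially_seg[of "\<lambda>i. \<not> P i" k]
  by (simp add: eventually_cofinite flip: cofinite_eq_sequentially)

lemma adam_wins_inf_shift: "adam_wins_inf \<phi> (\<lambda>i. p (i + k)) = adam_wins_inf \<phi> p"
proof -
  have "inf_vars (\<lambda>i. p (i + k)) = inf_vars p"
    unfolding inf_vars_def using finite_shift_iff[of "\<lambda>i. snd (p i) = FVar _" k] by auto
  then show ?thesis by (simp add: adam_wins_inf_def)
qed

lemma drop_map_upt: "k \<le> m \<Longrightarrow> drop k (map p [0..<m]) = map (\<lambda>i. p (i + k)) [0..<m - k]"
  by (rule nth_equalityI) (auto simp: add.commute)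

lemma obtain_last:
  fixes P :: "nat \<Rightarrow> bool"
  assumes "P k\<^sub>0" "k\<^sub>0 \<le> n"
  obtains k where "k \<le> n" "P k" "\<And>i. k < i \<Longrightarrow> i \<le> n \<Longrightarrow> \<not> P i"
proof -
  have "\<exists>k. (k \<le> n \<and> P k) \<and> (\<forall>i. i \<le> n \<and> P i \<longrightarrow> i \<le> k)"
    by (rule Nat.ex_has_greatest_nat[where k = k\<^sub>0 and b = n]) (use assms in auto)
  then obtain k where "k \<le> n" "P k" and greatest: "\<forall>i. i \<le> n \<and> P i \<longrightarrow> i \<le> k" by blast
  moreover have "\<not> P i" if "k < i" "i \<le> n" for i
    using greatest that by (meson leD)
  ultimately show thesis using that by blast
qed

lemma obtain_first:
  fixes P :: "nat \<Rightarrow> bool"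
  assumes "P k\<^sub>0"
  obtains k where "k \<le> k\<^sub>0" "P k" "\<And>i. i < k \<Longrightarrow> \<not> P i"
  using assms exists_least_iff[of P] by (metis not_le_imp_less)

lemma ex_le_shift:
  assumes "k \<le> n" "\<exists>i\<le>n - k. P (i + k)"
  shows "\<exists>i::nat\<le>n. P i"
proof -
  obtain i where "i \<le> n - k" "P (i + k)" using assms(2) by blast
  with assms(1) show ?thesis by (intro exI[of _ "i + k"]) simp
qed

lemma all_le_shift:
  assumes "k \<le> n" "\<forall>i<k. P i" "\<forall>i\<le>n - k. P (i + k)"
  shows "\<forall>i::nat\<le>n. P i"
proof (intro allI impI)
  fix i assume "i \<le> n"
  show "P i"
  proof (cases "i < k")
    case False
    then have "i - k \<le> n - k" "i - k + k = i" using \<open>i \<le> n\<close> by auto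
    then show ?thesis using assms(3) by metis
  qed (use assms(2) in blast)
qed

type_synonym ('s,'a,'v) strategy = "('s,'a,'v) pos list \<Rightarrow> ('s,'a,'v) pos"

locale tfl_game =
  fixes TS :: "('s,'a,'x) tsi_scheme" and V :: "'v \<Rightarrow> ('s,'a) proc set" and \<phi> :: "('a,'v) tfl"
  assumes tsi: "is_tsi TS" and V_procs: "\<forall>Z. V Z \<subseteq> procs TS" and pnf: "pnf \<phi>"
begin

text \<open>Adam has to follow \<open>\<sigma>\<close> only where it proposes a legal move, so strategies can be
  composed freely and made legal at the very end.\<close>
definition play_prefix ::
  "('s,'a,'v) strategy \<Rightarrow> ('s,'a,'v) pos \<Rightarrow> (nat \<Rightarrow> ('s,'a,'v) pos) \<Rightarrow> nat \<Rightarrow> bool" where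
  "play_prefix \<sigma> P p n \<longleftrightarrow> p 0 = P \<and> (\<forall>i<n. p (Suc i) \<in> moves TS \<phi> (p i) \<and>
     (adam_pos (p i) \<and> \<sigma> (map p [0..<Suc i]) \<in> moves TS \<phi> (p i) \<longrightarrow>
        p (Suc i) = \<sigma> (map p [0..<Suc i])))"

lemma play_prefix_0: "play_prefix \<sigma> P p n \<Longrightarrow> p 0 = P"
  by (simp add: play_prefix_def)

lemma play_prefix_le: "play_prefix \<sigma> P p n \<Longrightarrow> m \<le> n \<Longrightarrow> play_prefix \<sigma> P p m"
  by (simp add: play_prefix_def)

lemma play_prefix_move: "play_prefix \<sigma> P p n \<Longrightarrow> i < n \<Longrightarrow> p (Suc i) \<in> moves TS \<phi> (p i)"
  by (simp add: play_prefix_def)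

lemma play_prefix_adam:
  "play_prefix \<sigma> P p n \<Longrightarrow> i < n \<Longrightarrow> adam_pos (p i) \<Longrightarrow> \<sigma> (map p [0..<Suc i]) \<in> moves TS \<phi> (p i) \<Longrightarrow>
     p (Suc i) = \<sigma> (map p [0..<Suc i])"
  by (simp add: play_prefix_def)

lemma play_prefix_suffix:
  assumes play: "play_prefix \<sigma> P p n" and "k \<le> n"
    and same: "\<And>j. k \<le> j \<Longrightarrow> j < n \<Longrightarrow>
      \<sigma> (map p [0..<Suc j]) = \<sigma>' (map (\<lambda>i. p (i + k)) [0..<Suc (j - k)])"
  shows "play_prefix \<sigma>' (p k) (\<lambda>i. p (i + k)) (n - k)"
proof -
  have "p (Suc i + k) \<in> moves TS \<phi> (p (i + k)) \<and>
      (adam_pos (p (i + k)) \<and> \<sigma>' (map (\<lambda>i. p (i + k)) [0..<Suc i]) \<in> moves TS \<phi> (p (i + k)) \<longrightarrow>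
        p (Suc i + k) = \<sigma>' (map (\<lambda>i. p (i + k)) [0..<Suc i]))" if "i < n - k" for i
  proof -
    have "i + k < n" using that by simp
    then have "p (Suc (i + k)) \<in> moves TS \<phi> (p (i + k)) \<and>
      (adam_pos (p (i + k)) \<and> \<sigma> (map p [0..<Suc (i + k)]) \<in> moves TS \<phi> (p (i + k)) \<longrightarrow>
        p (Suc (i + k)) = \<sigma> (map p [0..<Suc (i + k)]))"
      using play unfolding play_prefix_def by blast
    moreover have "\<sigma> (map p [0..<Suc (i + k)]) = \<sigma>' (map (\<lambda>i. p (i + k)) [0..<Suc i])"
      using same[of "i + k"] \<open>i + k < n\<close> by simp
    ultimately show ?thesis by simp
  qed
  then show ?thesis by (simp add: play_prefix_def)
qed

text \<open>A play stays within \<open>\<psi>\<close> while its formulas are subformulas of \<open>\<psi>\<close>, where a variable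
  only counts if it is bound inside \<open>\<psi>\<close>; a free variable is an exit.\<close>
definition within :: "('a,'v) tfl \<Rightarrow> ('s,'a,'v) pos \<Rightarrow> bool" where
  "within \<psi> Q \<longleftrightarrow> (case snd Q of FVar Y \<Rightarrow> Y \<in> set (bvars \<psi>) | \<chi> \<Rightarrow> \<chi> \<in> sub \<psi>)"

definition exits :: "('v \<Rightarrow> ('s,'a) proc set) \<Rightarrow> ('a,'v) tfl \<Rightarrow> ('s,'a,'v) pos set" where
  "exits V' \<psi> = {(H, FVar Y) | H Y. Y \<in> fvars \<psi> \<and> H \<in> procs TS \<and> H \<notin> V' Y}"

text \<open>\<open>\<sigma>\<close> wins from \<open>P\<close> relative to \<open>X\<close>: every play either reaches \<open>X\<close>, where an
  enclosing strategy takes over, or stays within \<open>\<psi>\<close> and is won by Adam.\<close>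
definition wins ::
  "('s,'a,'v) pos set \<Rightarrow> ('a,'v) tfl \<Rightarrow> ('s,'a,'v) pos \<Rightarrow> ('s,'a,'v) strategy \<Rightarrow> bool" where
  "wins X \<psi> P \<sigma> \<longleftrightarrow>
     (\<forall>p n. play_prefix \<sigma> P p n \<longrightarrow> (\<exists>i\<le>n. p i \<in> X) \<or>
        ((\<forall>i\<le>n. within \<psi> (p i)) \<and> (moves TS \<phi> (p n) = {} \<longrightarrow> adam_wins_end V (p n)))) \<and>
     (\<forall>p. (\<forall>n. play_prefix \<sigma> P p n) \<longrightarrow> (\<exists>i. p i \<in> X) \<or> adam_wins_inf \<phi> p)"

lemma winsD_prefix:
  "wins X \<psi> P \<sigma> \<Longrightarrow> play_prefix \<sigma> P p n \<Longrightarrow> (\<exists>i\<le>n. p i \<in> X) \<or>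
     ((\<forall>i\<le>n. within \<psi> (p i)) \<and> (moves TS \<phi> (p n) = {} \<longrightarrow> adam_wins_end V (p n)))"
  unfolding wins_def by blast

lemma winsD_play:
  "wins X \<psi> P \<sigma> \<Longrightarrow> (\<And>n. play_prefix \<sigma> P p n) \<Longrightarrow> (\<exists>i. p i \<in> X) \<or> adam_wins_inf \<phi> p"
  unfolding wins_def by blast

lemma wins_first_exit:
  assumes wins: "wins X \<psi> P \<sigma>" and play: "play_prefix \<sigma> P p n"
  shows "(\<exists>j\<le>n. p j \<in> X \<and> (\<forall>i<j. within \<psi> (p i))) \<or>
    ((\<forall>i\<le>n. within \<psi> (p i)) \<and> (moves TS \<phi> (p n) = {} \<longrightarrow> adam_wins_end V (p n)))"
proof (cases "\<exists>j\<le>n. p j \<in> X")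
  case True
  then obtain j\<^sub>0 where j\<^sub>0: "j\<^sub>0 \<le> n" "p j\<^sub>0 \<in> X" by blast
  obtain j where "j \<le> j\<^sub>0" and hit: "p j \<in> X" and before: "\<And>i. i < j \<Longrightarrow> p i \<notin> X"
    using obtain_first[where P = "\<lambda>j. p j \<in> X", OF j\<^sub>0(2)] by blast
  with j\<^sub>0 have j: "j \<le> n" "p j \<in> X" by simp_all
  have "\<forall>i<j. within \<psi> (p i)"
  proof (cases j)
    case (Suc j')
    then have "play_prefix \<sigma> P p j'" using play_prefix_le[OF play] j(1) by simp
    moreover have "\<not> (\<exists>i\<le>j'. p i \<in> X)" using before Suc by auto
    ultimately have "\<forall>i\<le>j'. within \<psi> (p i)" using winsD_prefix[OF wins] by blast
    then show ?thesis using Suc by (simp add: less_Suc_eq_le)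
  qed simp
  with j show ?thesis by blast
next
  case False
  with winsD_prefix[OF wins play] show ?thesis by blast
qed

lemma wins_exit: "P \<in> X \<Longrightarrow> wins X \<psi> P \<sigma>"
  unfolding wins_def by (blast dest: play_prefix_0 intro: le0)

lemma wins_terminal:
  assumes "moves TS \<phi> P = {}" "adam_wins_end V P" "within \<psi> P"
  shows "wins X \<psi> P \<sigma>"
proof -
  have "n = 0 \<and> p n = P" if "play_prefix \<sigma> P p n" for p n
    using play_prefix_move[OF that, of 0] play_prefix_0[OF that] assms(1) by (cases n) auto
  then show ?thesis
    unfolding wins_def using assms by (metis Suc_neq_Zero le_zero_eq)
qed

lemma within_iff:
  "within \<psi> Q \<longleftrightarrow> (\<exists>Y. snd Q = FVar Y \<and> Y \<in> set (bvars \<psi>)) \<or>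
     ((\<forall>Y. snd Q \<noteq> FVar Y) \<and> snd Q \<in> sub \<psi>)"
  by (cases "snd Q") (simp_all add: within_def)

lemma within_mono: "\<psi> \<in> sub \<psi>' \<Longrightarrow> within \<psi> Q \<Longrightarrow> within \<psi>' Q"
  unfolding within_iff using sub_trans set_bvars_sub by blast

lemma exits_mono: "fvars \<psi> \<subseteq> fvars \<psi>' \<Longrightarrow> exits V' \<psi> \<subseteq> exits V' \<psi>'"
  unfolding exits_def by blast

lemma wins_mono:
  "wins X \<psi> P \<sigma> \<Longrightarrow> X \<subseteq> X' \<Longrightarrow> (\<And>Q. within \<psi> Q \<Longrightarrow> within \<psi>' Q) \<Longrightarrow> wins X' \<psi>' P \<sigma>"
  unfolding wins_def by blast

lemma wins_operand:
  assumes "wins (exits V' \<psi>) \<psi> P \<sigma>" "\<psi> \<in> operands \<chi>"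
  shows "wins (exits V' \<chi>) \<chi> P \<sigma>"
proof (rule wins_mono[OF assms(1)])
  show "exits V' \<psi> \<subseteq> exits V' \<chi>" using assms(2) by (intro exits_mono fvars_operands)
  show "within \<chi> Q" if "within \<psi> Q" for Q using assms(2) that by (rule within_mono[OF operands_sub])
qed

lemma wins_continue:
  assumes "wins X \<psi> (p k) \<sigma>" "play_prefix \<sigma> (p k) (\<lambda>i. p (i + k)) (n - k)"
    and "k \<le> n" "\<forall>i<k. within \<psi> (p i)"
  shows "(\<exists>i\<le>n. p i \<in> X) \<or>
    ((\<forall>i\<le>n. within \<psi> (p i)) \<and> (moves TS \<phi> (p n) = {} \<longrightarrow> adam_wins_end V (p n)))"
proof -
  have "(\<exists>i\<le>n - k. p (i + k) \<in> X) \<or> ((\<forall>i\<le>n - k. within \<psi> (p (i + k))) \<and>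
      (moves TS \<phi> (p (n - k + k)) = {} \<longrightarrow> adam_wins_end V (p (n - k + k))))"
    using winsD_prefix[OF assms(1,2)] .
  then show ?thesis
    using ex_le_shift[OF assms(3), of "\<lambda>i. p i \<in> X"]
      all_le_shift[OF assms(3,4)] assms(3) by auto
qed

lemma wins_continue_play:
  assumes "wins X \<psi> (p k) \<sigma>" "\<And>n. play_prefix \<sigma> (p k) (\<lambda>i. p (i + k)) n"
  shows "(\<exists>i. p i \<in> X) \<or> adam_wins_inf \<phi> p"
  using winsD_play[OF assms] adam_wins_inf_shift by blast

definition step_strategy ::
  "('s,'a,'v) pos \<Rightarrow> (('s,'a,'v) pos \<Rightarrow> ('s,'a,'v) strategy) \<Rightarrow> ('s,'a,'v) strategy" where
  "step_strategy Q\<^sub>0 st h = (if length h \<le> 1 then Q\<^sub>0 else st (h ! 1) (tl h))"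

lemma play_prefix_step:
  assumes play: "play_prefix (step_strategy Q\<^sub>0 st) P p n" and "1 \<le> n"
  shows "play_prefix (st (p 1)) (p 1) (\<lambda>i. p (i + 1)) (n - 1)"
    and "adam_pos P \<Longrightarrow> Q\<^sub>0 \<in> moves TS \<phi> P \<Longrightarrow> p 1 = Q\<^sub>0"
proof -
  show "play_prefix (st (p 1)) (p 1) (\<lambda>i. p (i + 1)) (n - 1)"
  proof (rule play_prefix_suffix[OF play \<open>1 \<le> n\<close>])
    fix j assume "1 \<le> j" "j < n"
    then have "tl (map p [0..<Suc j]) = map (\<lambda>i. p (i + 1)) [0..<Suc (j - 1)]"
      using drop_map_upt[of 1 "Suc j" p] by (simp add: drop_Suc del: upt_Suc)
    with \<open>1 \<le> j\<close> show "step_strategy Q\<^sub>0 st (map p [0..<Suc j]) =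
        st (p 1) (map (\<lambda>i. p (i + 1)) [0..<Suc (j - 1)])"
      by (simp add: step_strategy_def del: upt_Suc)
  qed
  assume "adam_pos P" "Q\<^sub>0 \<in> moves TS \<phi> P"
  then show "p 1 = Q\<^sub>0"
    using play_prefix_adam[OF play, of 0] play_prefix_0[OF play] \<open>1 \<le> n\<close>
    by (simp add: step_strategy_def)
qed

lemma wins_step:
  assumes "within \<psi> P"
    and terminal: "moves TS \<phi> P = {} \<Longrightarrow> adam_wins_end V P"
    and adam: "adam_pos P \<Longrightarrow> Q\<^sub>0 \<in> moves TS \<phi> P \<and> wins X \<psi> Q\<^sub>0 (st Q\<^sub>0)"
    and eve: "\<not> adam_pos P \<Longrightarrow> \<forall>Q \<in> moves TS \<phi> P. wins X \<psi> Q (st Q)"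
  shows "wins X \<psi> P (step_strategy Q\<^sub>0 st)"
proof -
  have next_move: "wins X \<psi> (p 1) (st (p 1)) \<and> play_prefix (st (p 1)) (p 1) (\<lambda>i. p (i + 1)) (n - 1)"
    if play: "play_prefix (step_strategy Q\<^sub>0 st) P p n" and "1 \<le> n" for p n
  proof -
    have "p 1 \<in> moves TS \<phi> P" using play_prefix_move[OF play, of 0] play_prefix_0[OF play] \<open>1 \<le> n\<close> by simp
    then have "wins X \<psi> (p 1) (st (p 1))"
      using adam eve play_prefix_step(2)[OF play \<open>1 \<le> n\<close>] by (cases "adam_pos P") auto
    with play_prefix_step(1)[OF that] show ?thesis by blast
  qed
  show ?thesis
    unfolding wins_def
  proof (intro conjI allI impI)
    fix p n assume play: "play_prefix (step_strategy Q\<^sub>0 st) P p n"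
    show "(\<exists>i\<le>n. p i \<in> X) \<or> ((\<forall>i\<le>n. within \<psi> (p i)) \<and> (moves TS \<phi> (p n) = {} \<longrightarrow> adam_wins_end V (p n)))"
    proof (cases "n = 0")
      case True
      then show ?thesis using play_prefix_0[OF play] assms(1) terminal by simp
    next
      case False
      then have "wins X \<psi> (p 1) (st (p 1))" "play_prefix (st (p 1)) (p 1) (\<lambda>i. p (i + 1)) (n - 1)"
        using next_move[OF play] by auto
      moreover have "\<forall>i<1. within \<psi> (p i)" using play_prefix_0[OF play] assms(1) by simp
      ultimately show ?thesis using False by (intro wins_continue) auto
    qed
  next
    fix p assume play: "\<forall>n. play_prefix (step_strategy Q\<^sub>0 st) P p n"
    then have "wins X \<psi> (p 1) (st (p 1))" "\<And>n. play_prefix (st (p 1)) (p 1) (\<lambda>i. p (i + 1)) n"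
      using next_move[of p "Suc _"] by auto
    then show "(\<exists>i. p i \<in> X) \<or> adam_wins_inf \<phi> p" by (rule wins_continue_play)
  qed
qed

lemma wins_eve_step:
  assumes "within \<psi> P" "\<not> adam_pos P" "moves TS \<phi> P = {} \<Longrightarrow> adam_wins_end V P"
    and "\<And>Q. Q \<in> moves TS \<phi> P \<Longrightarrow> \<exists>\<sigma>. wins X \<psi> Q \<sigma>"
  shows "\<exists>\<sigma>. wins X \<psi> P \<sigma>"
proof -
  let ?st = "\<lambda>Q. SOME \<sigma>. wins X \<psi> Q \<sigma>"
  have "\<forall>Q \<in> moves TS \<phi> P. wins X \<psi> Q (?st Q)" using assms(4) someI_ex by metis
  then show ?thesis using wins_step[where st = ?st and Q\<^sub>0 = undefined] assms(1-3) by blast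
qed

lemma wins_adam_step:
  assumes "within \<psi> P" "adam_pos P" "Q \<in> moves TS \<phi> P" "wins X \<psi> Q \<sigma>"
  shows "\<exists>\<sigma>. wins X \<psi> P \<sigma>"
  using wins_step[where Q\<^sub>0 = Q and st = "\<lambda>_. \<sigma>"] assms by blast

definition switch_strategy ::
  "(('s,'a,'v) pos \<Rightarrow> bool) \<Rightarrow> ('s,'a,'v) strategy \<Rightarrow> (('s,'a,'v) pos \<Rightarrow> ('s,'a,'v) strategy) \<Rightarrow>
    ('s,'a,'v) strategy" where
  "switch_strategy D \<sigma> st h =
     (if \<exists>k<length h. D (h ! k)
      then let k = LEAST k. k < length h \<and> D (h ! k) in st (h ! k) (drop k h)
      else \<sigma> h)"

lemma last_map_upt_Suc: "last (map p [0..<Suc j]) = p j"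
  by simp

lemma nth_map_upt_Suc: "i \<le> j \<Longrightarrow> map p [0..<Suc j] ! i = p i"
  by (simp add: nth_map_upt less_Suc_eq_le del: upt_Suc)

lemma play_prefix_switch_before:
  assumes play: "play_prefix (switch_strategy D \<sigma> st) P p n" and "\<forall>i<n. \<not> D (p i)"
  shows "play_prefix \<sigma> P p n"
proof -
  have "play_prefix \<sigma> (p 0) (\<lambda>i. p (i + 0)) (n - 0)"
  proof (rule play_prefix_suffix[OF play])
    fix j assume "0 \<le> j" "j < n"
    then have "\<not> (\<exists>k<length (map p [0..<Suc j]). D (map p [0..<Suc j] ! k))"
      using assms(2) nth_map_upt_Suc by (auto simp: less_Suc_eq_le simp del: upt_Suc)
    then have "switch_strategy D \<sigma> st (map p [0..<Suc j]) = \<sigma> (map p [0..<Suc j])"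
      unfolding switch_strategy_def by (rule if_not_P)
    then show "switch_strategy D \<sigma> st (map p [0..<Suc j]) = \<sigma> (map (\<lambda>i. p (i + 0)) [0..<Suc (j - 0)])"
      by simp
  qed simp
  then show ?thesis using play_prefix_0[OF play] by simp
qed

lemma play_prefix_switch_after:
  assumes play: "play_prefix (switch_strategy D \<sigma> st) P p n"
    and "k \<le> n" "D (p k)" "\<forall>i<k. \<not> D (p i)"
  shows "play_prefix (st (p k)) (p k) (\<lambda>i. p (i + k)) (n - k)"
proof (rule play_prefix_suffix[OF play \<open>k \<le> n\<close>])
  fix j assume j: "k \<le> j" "j < n"
  let ?h = "map p [0..<Suc j]"
  have "(LEAST k'. k' < length ?h \<and> D (?h ! k')) = k"
    by (rule Least_equality)
      (use j assms(3,4) nth_map_upt_Suc in \<open>auto simp: less_Suc_eq_le not_less[symmetric] simp del: upt_Suc\<close>)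
  moreover have "drop k ?h = map (\<lambda>i. p (i + k)) [0..<Suc (j - k)]"
    using drop_map_upt[of k "Suc j" p] j by (simp add: Suc_diff_le del: upt_Suc)
  moreover have "\<exists>k'<length ?h. D (?h ! k')"
    using j assms(3) nth_map_upt_Suc[of k j p] by (intro exI[of _ k]) (simp del: upt_Suc)
  ultimately show "switch_strategy D \<sigma> st ?h = st (p k) (map (\<lambda>i. p (i + k)) [0..<Suc (j - k)])"
    using nth_map_upt_Suc[of k j p] j by (simp add: switch_strategy_def del: upt_Suc)
qed

context
  fixes D :: "('s,'a,'v) pos \<Rightarrow> bool" and \<sigma> :: "('s,'a,'v) strategy"
    and st :: "('s,'a,'v) pos \<Rightarrow> ('s,'a,'v) strategy"
    and X X\<^sub>1 :: "('s,'a,'v) pos set" and \<psi> \<chi> :: "('a,'v) tfl" and P :: "('s,'a,'v) pos"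
  assumes first: "wins X\<^sub>1 \<psi> P \<sigma>"
    and inside: "\<And>Q. within \<psi> Q \<Longrightarrow> within \<chi> Q \<and> \<not> D Q"
    and handoff: "\<And>Q. Q \<in> X\<^sub>1 \<Longrightarrow> Q \<in> X \<or> (D Q \<and> wins X \<chi> Q (st Q))"
begin

lemma switch_handover:
  assumes play: "play_prefix (switch_strategy D \<sigma> st) P p k"
    and D: "D (p k)" "\<forall>i<k. \<not> D (p i)"
  shows "(\<exists>i\<le>k. p i \<in> X) \<or> ((\<forall>i<k. within \<chi> (p i)) \<and> wins X \<chi> (p k) (st (p k)))"
proof -
  have "play_prefix \<sigma> P p k" using play_prefix_switch_before[OF play D(2)] .
  from wins_first_exit[OF first this] consider
      (exit) j where "j \<le> k" "p j \<in> X\<^sub>1" "\<forall>i<j. within \<psi> (p i)"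
    | (within) "\<forall>i\<le>k. within \<psi> (p i)"
    by blast
  then show ?thesis
  proof cases
    case exit
    from handoff[OF exit(2)] show ?thesis
    proof
      assume "D (p j) \<and> wins X \<chi> (p j) (st (p j))"
      moreover from this have "j = k" using D(2) exit(1) by (meson le_neq_implies_less)
      ultimately show ?thesis using exit(3) inside by blast
    qed (use exit(1) in blast)
  qed (use inside D(1) in blast)
qed

lemma switch_prefix:
  assumes play: "play_prefix (switch_strategy D \<sigma> st) P p n"
  shows "(\<exists>i\<le>n. p i \<in> X) \<or>
    ((\<forall>i\<le>n. within \<chi> (p i)) \<and> (moves TS \<phi> (p n) = {} \<longrightarrow> adam_wins_end V (p n)))"
proof (cases "\<exists>k\<le>n. D (p k)")
  case True
  then obtain k\<^sub>0 where "k\<^sub>0 \<le> n" "D (p k\<^sub>0)" by blast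
  moreover obtain k where "k \<le> k\<^sub>0" "D (p k)" "\<And>i. i < k \<Longrightarrow> \<not> D (p i)"
    using obtain_first[where P = "\<lambda>i. D (p i)", OF \<open>D (p k\<^sub>0)\<close>] by blast
  ultimately have k: "k \<le> n" "D (p k)" "\<forall>i<k. \<not> D (p i)" by auto
  from switch_handover[OF play_prefix_le[OF play k(1)] k(2,3)] show ?thesis
  proof (elim disjE conjE)
    assume "\<forall>i<k. within \<chi> (p i)" "wins X \<chi> (p k) (st (p k))"
    then show ?thesis using play_prefix_switch_after[OF play k] k(1) by (intro wins_continue)
  qed (use k(1) in auto)
next
  case False
  then have "play_prefix \<sigma> P p n" using play_prefix_switch_before[OF play] by auto
  have "\<not> D (p i)" if "i \<le> n" for i using False that by blast
  with winsD_prefix[OF first \<open>play_prefix \<sigma> P p n\<close>] show ?thesis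
    using handoff inside by meson
qed

lemma switch_play:
  assumes play: "\<forall>n. play_prefix (switch_strategy D \<sigma> st) P p n"
  shows "(\<exists>i. p i \<in> X) \<or> adam_wins_inf \<phi> p"
proof (cases "\<exists>k. D (p k)")
  case True
  then obtain k\<^sub>0 where "D (p k\<^sub>0)" by blast
  then obtain k where k: "D (p k)" "\<forall>i<k. \<not> D (p i)"
    using obtain_first[where P = "\<lambda>i. D (p i)"] by blast
  from switch_handover[OF play[rule_format, of k] k] show ?thesis
  proof (elim disjE conjE)
    assume "wins X \<chi> (p k) (st (p k))"
    moreover have "play_prefix (st (p k)) (p k) (\<lambda>i. p (i + k)) m" for m
      using play_prefix_switch_after[OF play[rule_format, of "m + k"] _ k] by simp
    ultimately show ?thesis by (rule wins_continue_play)
  qed blast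
next
  case False
  then have "play_prefix \<sigma> P p n" for n using play_prefix_switch_before play by blast
  then have "(\<exists>i. p i \<in> X\<^sub>1) \<or> adam_wins_inf \<phi> p" by (rule winsD_play[OF first])
  then show ?thesis using handoff False by blast
qed

lemma wins_switch: "wins X \<chi> P (switch_strategy D \<sigma> st)"
  unfolding wins_def using switch_prefix switch_play by blast

end

definition restart_strategy ::
  "(('s,'a,'v) pos \<Rightarrow> bool) \<Rightarrow> (('s,'a,'v) pos \<Rightarrow> ('s,'a,'v) strategy) \<Rightarrow> ('s,'a,'v) strategy" where
  "restart_strategy D st h =
     (let k = GREATEST k. k < length h \<and> D (h ! k) in st (h ! k) (drop (Suc k) h))"

lemma play_prefix_restart_after:
  assumes play: "play_prefix (restart_strategy D st) P p n"
    and "D (p k)" "k < n" "\<forall>i. k < i \<longrightarrow> i < n \<longrightarrow> \<not> D (p i)" "moves TS \<phi> (p k) = {Q}"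
  shows "play_prefix (st (p k)) Q (\<lambda>i. p (i + Suc k)) (n - Suc k)"
proof -
  have "p (Suc k) = Q" using play_prefix_move[OF play \<open>k < n\<close>] assms(5) by simp
  moreover have "play_prefix (st (p k)) (p (Suc k)) (\<lambda>i. p (i + Suc k)) (n - Suc k)"
  proof (rule play_prefix_suffix[OF play])
    show "Suc k \<le> n" using \<open>k < n\<close> by simp
  next
    fix j assume j: "Suc k \<le> j" "j < n"
    let ?h = "map p [0..<Suc j]"
    have "(GREATEST k'. k' < length ?h \<and> D (?h ! k')) = k"
      by (rule Greatest_equality)
        (use j assms(2,4) nth_map_upt_Suc in \<open>auto simp: less_Suc_eq_le not_less[symmetric] simp del: upt_Suc\<close>)
    moreover have "drop (Suc k) ?h = map (\<lambda>i. p (i + Suc k)) [0..<Suc (j - Suc k)]"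
      using drop_map_upt[of "Suc k" "Suc j" p] j by (simp add: Suc_diff_Suc del: upt_Suc)
    ultimately show "restart_strategy D st ?h = st (p k) (map (\<lambda>i. p (i + Suc k)) [0..<Suc (j - Suc k)])"
      using nth_map_upt_Suc[of k j p] j by (simp add: restart_strategy_def del: upt_Suc)
  qed
  ultimately show ?thesis by simp
qed

context
  fixes D :: "('s,'a,'v) pos \<Rightarrow> bool" and st :: "('s,'a,'v) pos \<Rightarrow> ('s,'a,'v) strategy"
    and succ :: "('s,'a,'v) pos \<Rightarrow> ('s,'a,'v) pos"
    and X X\<^sub>1 :: "('s,'a,'v) pos set" and \<psi> \<chi> :: "('a,'v) tfl"
  assumes restart: "\<And>Q. D Q \<Longrightarrow> moves TS \<phi> Q = {succ Q} \<and> within \<chi> Q \<and> wins X\<^sub>1 \<psi> (succ Q) (st Q)"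
    and inside: "\<And>Q. within \<psi> Q \<Longrightarrow> within \<chi> Q \<and> \<not> D Q"
    and handoff: "\<And>Q. Q \<in> X\<^sub>1 \<Longrightarrow> Q \<in> X \<or> D Q"
begin

lemma restart_round:
  assumes play: "play_prefix (restart_strategy D st) P p m" and k: "k \<le> m" "D (p k)"
    and fresh: "\<forall>i. k < i \<longrightarrow> i < m \<longrightarrow> \<not> D (p i)"
  shows "(\<exists>i\<le>m. p i \<in> X) \<or> ((\<forall>i. k \<le> i \<and> i \<le> m \<longrightarrow> within \<chi> (p i)) \<and>
    (moves TS \<phi> (p m) = {} \<longrightarrow> adam_wins_end V (p m)))"
proof (cases "k = m")
  case True
  then show ?thesis using restart[OF k(2)] by auto
next
  case False
  then have "k < m" using k(1) by simp
  have suffix: "play_prefix (st (p k)) (succ (p k)) (\<lambda>i. p (i + Suc k)) (m - Suc k)"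
    using play_prefix_restart_after[OF play k(2) \<open>k < m\<close> fresh] restart[OF k(2)] by blast
  have m: "m - Suc k + Suc k = m" using \<open>k < m\<close> by simp
  have within_k: "within \<chi> (p k)" using restart[OF k(2)] by blast
  from wins_first_exit[OF _ suffix] restart[OF k(2)] consider
      (exit) j where "j \<le> m - Suc k" "p (j + Suc k) \<in> X\<^sub>1" "\<forall>i<j. within \<psi> (p (i + Suc k))"
    | (within) "\<forall>i\<le>m - Suc k. within \<psi> (p (i + Suc k))"
        "moves TS \<phi> (p m) = {} \<longrightarrow> adam_wins_end V (p m)"
    unfolding m by blast
  then show ?thesis
  proof cases
    case exit
    from handoff[OF exit(2)] show ?thesis
    proof
      assume D: "D (p (j + Suc k))"
      have "j + Suc k \<le> m" using exit(1) \<open>k < m\<close> by simp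
      moreover have "\<not> j + Suc k < m" using fresh D by auto
      ultimately have j: "j + Suc k = m" by simp
      have "within \<chi> (p i)" if "k \<le> i" "i \<le> m" for i
      proof (cases "i = k \<or> i = m")
        case False
        then have "i - Suc k < j" "i - Suc k + Suc k = i" using that j by auto
        then show ?thesis using exit(3) inside by metis
      qed (use within_k restart[OF D] j in auto)
      moreover have "moves TS \<phi> (p m) \<noteq> {}" using restart D j by auto
      ultimately show ?thesis by blast
    qed (use exit(1) \<open>k < m\<close> in \<open>auto intro!: exI[of _ "j + Suc k"]\<close>)
  next
    case within
    have "within \<chi> (p i)" if "k \<le> i" "i \<le> m" for i
    proof (cases "i = k")
      case False
      then have "i - Suc k \<le> m - Suc k" "i - Suc k + Suc k = i" using that by auto
      then show ?thesis using within(1) inside by metis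
    qed (use within_k in simp)
    with within(2) show ?thesis by blast
  qed
qed

lemma restart_reach:
  assumes start: "D P" and play: "play_prefix (restart_strategy D st) P p n" and "m \<le> n" "D (p m)"
  shows "(\<exists>i\<le>m. p i \<in> X) \<or> (\<forall>i\<le>m. within \<chi> (p i))"
  using assms(3,4)
proof (induction m rule: less_induct)
  case (less m)
  show ?case
  proof (cases "m = 0")
    case True
    then show ?thesis using play_prefix_0[OF play] restart[OF start] by auto
  next
    case False
    have "D (p 0)" using play_prefix_0[OF play] start by simp
    then obtain k where k: "k \<le> m - 1" "D (p k)" "\<And>i. k < i \<Longrightarrow> i \<le> m - 1 \<Longrightarrow> \<not> D (p i)"
      using obtain_last[where P = "\<lambda>i. D (p i)" and n = "m - 1"] by blast
    then have "k < m" using False by simp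
    have "(\<exists>i\<le>k. p i \<in> X) \<or> (\<forall>i\<le>k. within \<chi> (p i))"
      using less.IH[OF \<open>k < m\<close>] \<open>k < m\<close> less.prems k(2) by simp
    moreover have "(\<exists>i\<le>m. p i \<in> X) \<or> (\<forall>i. k \<le> i \<and> i \<le> m \<longrightarrow> within \<chi> (p i))"
    proof -
      have "\<forall>i. k < i \<longrightarrow> i < m \<longrightarrow> \<not> D (p i)" using k(3) by simp
      with restart_round[OF play_prefix_le[OF play less.prems(1)] _ k(2)] \<open>k < m\<close> show ?thesis by auto
    qed
    ultimately show ?thesis using \<open>k < m\<close> by (meson le_cases order_trans less_imp_le)
  qed
qed

lemma restart_prefix:
  assumes start: "D P" and play: "play_prefix (restart_strategy D st) P p n"
  shows "(\<exists>i\<le>n. p i \<in> X) \<or>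
    ((\<forall>i\<le>n. within \<chi> (p i)) \<and> (moves TS \<phi> (p n) = {} \<longrightarrow> adam_wins_end V (p n)))"
proof -
  have "D (p 0)" using play_prefix_0[OF play] start by simp
  then obtain k where k: "k \<le> n" "D (p k)" "\<And>i. k < i \<Longrightarrow> i \<le> n \<Longrightarrow> \<not> D (p i)"
    using obtain_last[where P = "\<lambda>i. D (p i)" and n = n] by blast
  have "(\<exists>i\<le>k. p i \<in> X) \<or> (\<forall>i\<le>k. within \<chi> (p i))" by (rule restart_reach[OF start play k(1,2)])
  moreover have "(\<exists>i\<le>n. p i \<in> X) \<or> ((\<forall>i. k \<le> i \<and> i \<le> n \<longrightarrow> within \<chi> (p i)) \<and>
      (moves TS \<phi> (p n) = {} \<longrightarrow> adam_wins_end V (p n)))"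
    using restart_round[OF play k(1,2)] k(3) by simp
  ultimately show ?thesis using k(1) by (meson le_cases order_trans)
qed

lemma restart_play:
  assumes start: "D P" and play: "\<forall>n. play_prefix (restart_strategy D st) P p n"
    and loop: "\<forall>i. within \<chi> (p i) \<Longrightarrow> infinite {i. D (p i)} \<Longrightarrow> adam_wins_inf \<phi> p"
  shows "(\<exists>i. p i \<in> X) \<or> adam_wins_inf \<phi> p"
proof (cases "finite {i. D (p i)}")
  case True
  then obtain b where b: "\<And>i. D (p i) \<Longrightarrow> i \<le> b" using finite_nat_set_iff_bounded_le by auto
  have "D (p 0)" using play_prefix_0[OF play[rule_format, of 0]] start by simp
  then obtain k where k: "D (p k)" "\<And>i. k < i \<Longrightarrow> \<not> D (p i)"
    using obtain_last[where P = "\<lambda>i. D (p i)" and n = b] b by (metis le0)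
  have "play_prefix (st (p k)) (succ (p k)) (\<lambda>i. p (i + Suc k)) m" for m
    using play_prefix_restart_after[OF play[rule_format, of "m + Suc k"] k(1)] k(2) restart[OF k(1)]
    by simp
  with restart[OF k(1)] have "(\<exists>i. p (i + Suc k) \<in> X\<^sub>1) \<or> adam_wins_inf \<phi> (\<lambda>i. p (i + Suc k))"
    using winsD_play by blast
  then show ?thesis
  proof
    assume "\<exists>i. p (i + Suc k) \<in> X\<^sub>1"
    then obtain i where "p (i + Suc k) \<in> X\<^sub>1" by blast
    moreover have "\<not> D (p (i + Suc k))" using k(2) by simp
    ultimately show ?thesis using handoff by blast
  qed (use adam_wins_inf_shift[of \<phi> p "Suc k"] in simp)
next
  case False
  show ?thesis
  proof (cases "\<exists>i. p i \<in> X")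
    case no_exit: False
    have "within \<chi> (p i)" for i
    proof -
      have "\<exists>m. D (p m) \<and> i < m"
        using False unfolding finite_nat_set_iff_bounded_le by (auto simp: not_le)
      then obtain m where "i \<le> m" "D (p m)" using less_imp_le by blast
      then show ?thesis using restart_reach[OF start play[rule_format, of m] order_refl] no_exit by blast
    qed
    with False show ?thesis using loop by blast
  qed blast
qed

lemma wins_restart:
  assumes "D P" and "\<And>p. \<forall>i. within \<chi> (p i) \<Longrightarrow> infinite {i. D (p i)} \<Longrightarrow> adam_wins_inf \<phi> p"
  shows "wins X \<chi> P (restart_strategy D st)"
  unfolding wins_def
proof (intro conjI allI impI)
  fix p n assume "play_prefix (restart_strategy D st) P p n"
  then show "(\<exists>i\<le>n. p i \<in> X) \<or>
      ((\<forall>i\<le>n. within \<chi> (p i)) \<and> (moves TS \<phi> (p n) = {} \<longrightarrow> adam_wins_end V (p n)))"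
    by (rule restart_prefix[OF assms(1)])
next
  fix p assume "\<forall>n. play_prefix (restart_strategy D st) P p n"
  then show "(\<exists>i. p i \<in> X) \<or> adam_wins_inf \<phi> p" by (rule restart_play[OF assms(1) _ assms(2)])
qed

end

lemma distinct_bvars: "distinct (bvars \<phi>)"
  using pnf by (simp add: pnf_def)

lemma pnf_negations: "FNeg \<chi> \<in> sub \<phi> \<Longrightarrow> \<exists>Y. \<chi> = FVar Y"
  using pnf by (simp add: pnf_def)

lemma pnf_positive: "binds \<phi> Z \<beta> \<Longrightarrow> FNeg (FVar Z) \<notin> sub \<beta>"
  using pnf unfolding pnf_def by blast

lemma negated_var_free:
  assumes "FNeg (FVar Y) \<in> sub \<phi>"
  shows "Y \<notin> set (bvars \<phi>)"
proof
  assume "Y \<in> set (bvars \<phi>)"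
  moreover have "Y \<in> fvars \<phi> \<or> (\<exists>\<beta>. binds \<phi> Y \<beta> \<and> FNeg (FVar Y) \<in> sub \<beta>)"
    using fvars_sub_free_or_bound[OF assms] by simp
  ultimately show False using pnf unfolding pnf_def by blast
qed

lemma moves_bound_var:
  assumes "binds \<phi> Z \<psi>"
  shows "moves TS \<phi> (H, FVar Z) = {(H, \<psi>)}"
proof -
  have "binds \<phi> Z \<beta> \<longleftrightarrow> \<beta> = \<psi>" for \<beta>
    using binds_unique[OF distinct_bvars assms] assms by blast
  then show ?thesis by (simp only: moves.simps) blast
qed

lemma within_var [simp]: "within \<psi> (H, FVar Y) \<longleftrightarrow> Y \<in> set (bvars \<psi>)"
  by (simp add: within_def)

lemma within_self: "\<forall>Y. \<psi> \<noteq> FVar Y \<Longrightarrow> within \<psi> (H, \<psi>)"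
  by (simp add: within_iff)

lemma within_binder_body:
  assumes "B \<in> {Mu Z \<psi>, Nu Z \<psi>}" "B \<in> sub \<phi>" "within \<psi> Q"
  shows "within B Q \<and> snd Q \<noteq> FVar Z"
proof -
  have "\<psi> \<in> sub B" using assms(1) by auto
  moreover have "Z \<notin> set (bvars \<psi>)"
    using distinct_bvars_sub[OF assms(2) distinct_bvars] assms(1) by auto
  ultimately show ?thesis using assms(3) within_mono[of \<psi> B Q] unfolding within_iff by auto
qed

lemma exits_binder_body:
  assumes "B \<in> {Mu Z \<psi>, Nu Z \<psi>}" "Q \<in> exits (V'(Z := S)) \<psi>"
  shows "Q \<in> exits V' B \<or> (snd Q = FVar Z \<and> fst Q \<in> procs TS - S)"
  using assms unfolding exits_def by (auto split: if_splits)

lemma adam_wins_inf_Mu: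
  assumes "Mu Z \<psi> \<in> sub \<phi>" "\<forall>i. within (Mu Z \<psi>) (p i)" "infinite {i. snd (p i) = FVar Z}"
  shows "adam_wins_inf \<phi> p"
  unfolding adam_wins_inf_def
proof (rule exI[of _ Z], rule exI[of _ \<psi>], intro conjI ballI)
  show "Z \<in> inf_vars p" using assms(3) by (simp add: inf_vars_def)
  show "Mu Z \<psi> \<in> sub \<phi>" by (rule assms(1))
  fix Z' assume "Z' \<in> inf_vars p"
  then obtain i where "snd (p i) = FVar Z'" unfolding inf_vars_def using not_finite_existsD by blast
  moreover have "within (Mu Z \<psi>) (p i)" using assms(2) by blast
  ultimately have "Z' \<in> set (bvars (Mu Z \<psi>))" by (simp add: within_iff)
  then show "\<exists>\<psi>'. binds (Mu Z \<psi>) Z' \<psi>'" by (rule in_bvars_binds)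
qed

lemma wins_Mu_var:
  assumes bind: "Mu Z \<psi> \<in> sub \<phi>"
    and body: "\<And>H'. H' \<in> procs TS - L \<Longrightarrow> \<exists>\<sigma>. wins (exits (V'(Z := L)) \<psi>) \<psi> (H', \<psi>) \<sigma>"
    and H: "H \<in> procs TS - L"
  shows "\<exists>\<sigma>. wins (exits V' (Mu Z \<psi>)) (Mu Z \<psi>) (H, FVar Z) \<sigma>"
proof -
  let ?X\<^sub>1 = "exits (V'(Z := L)) \<psi>"
  define D where "D Q \<longleftrightarrow> snd Q = FVar Z \<and> fst Q \<in> procs TS - L" for Q :: "('s,'a,'v) pos"
  define st where "st Q = (SOME \<sigma>. wins ?X\<^sub>1 \<psi> (fst Q, \<psi>) \<sigma>)" for Q :: "('s,'a,'v) pos"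
  have B: "Mu Z \<psi> \<in> {Mu Z \<psi>, Nu Z \<psi>}" by simp
  have "wins (exits V' (Mu Z \<psi>)) (Mu Z \<psi>) (H, FVar Z) (restart_strategy D st)"
  proof (rule wins_restart[where succ = "\<lambda>Q. (fst Q, \<psi>)" and \<psi> = \<psi> and X\<^sub>1 = ?X\<^sub>1])
    show "D (H, FVar Z)" using H by (simp add: D_def)
  next
    fix Q assume "D Q"
    then obtain H' where Q: "Q = (H', FVar Z)" "H' \<in> procs TS - L"
      by (cases Q) (auto simp: D_def)
    have "wins ?X\<^sub>1 \<psi> (H', \<psi>) (st Q)"
      unfolding st_def Q(1) fst_conv by (rule someI_ex[OF body[OF Q(2)]])
    then show "moves TS \<phi> Q = {(fst Q, \<psi>)} \<and> within (Mu Z \<psi>) Q \<and> wins ?X\<^sub>1 \<psi> (fst Q, \<psi>) (st Q)"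
      using moves_bound_var bind Q(1) by simp
  next
    fix Q assume "within \<psi> Q"
    then show "within (Mu Z \<psi>) Q \<and> \<not> D Q" using within_binder_body[OF B bind] by (auto simp: D_def)
  next
    fix Q assume "Q \<in> ?X\<^sub>1"
    then show "Q \<in> exits V' (Mu Z \<psi>) \<or> D Q" using exits_binder_body[OF B] by (auto simp: D_def)
  next
    fix p :: "nat \<Rightarrow> ('s,'a,'v) pos"
    assume "\<forall>i. within (Mu Z \<psi>) (p i)" "infinite {i. D (p i)}"
    moreover have "{i. D (p i)} \<subseteq> {i. snd (p i) = FVar Z}" by (auto simp: D_def)
    ultimately show "adam_wins_inf \<phi> p" using adam_wins_inf_Mu[OF bind] finite_subset by blast
  qed
  then show ?thesis by blast
qed

lemma wins_Nu_var:
  assumes bind: "Nu Z \<psi> \<in> sub \<phi>"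
    and body: "\<And>S H'. S \<subseteq> procs TS \<Longrightarrow> H' \<in> procs TS - sem TS (V'(Z := S)) \<psi> \<Longrightarrow>
      \<exists>\<sigma>. wins (exits (V'(Z := S)) \<psi>) \<psi> (H', \<psi>) \<sigma>"
    and H: "H \<in> procs TS" "H \<notin> sem TS V' (Nu Z \<psi>)"
  shows "\<exists>\<sigma>. wins (exits V' (Nu Z \<psi>)) (Nu Z \<psi>) (H, FVar Z) \<sigma>"
proof -
  let ?X = "exits V' (Nu Z \<psi>)"
  have B: "Nu Z \<psi> \<in> {Mu Z \<psi>, Nu Z \<psi>}" by simp
  define W where "W = {H' \<in> procs TS. \<exists>\<sigma>. wins ?X (Nu Z \<psi>) (H', FVar Z) \<sigma>}"
  have "procs TS - sem TS (V'(Z := procs TS - W)) \<psi> \<subseteq> W"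
  proof
    fix H' assume H': "H' \<in> procs TS - sem TS (V'(Z := procs TS - W)) \<psi>"
    then obtain \<sigma> where \<sigma>: "wins (exits (V'(Z := procs TS - W)) \<psi>) \<psi> (H', \<psi>) \<sigma>"
      using body[of "procs TS - W"] by blast
    define D where "D Q \<longleftrightarrow> snd Q = FVar Z \<and> fst Q \<in> W" for Q :: "('s,'a,'v) pos"
    define st where "st Q = (SOME \<sigma>. wins ?X (Nu Z \<psi>) Q \<sigma>)" for Q :: "('s,'a,'v) pos"
    have switched: "wins ?X (Nu Z \<psi>) (H', \<psi>) (switch_strategy D \<sigma> st)"
    proof (rule wins_switch[OF \<sigma>])
      fix Q assume "within \<psi> Q"
      then show "within (Nu Z \<psi>) Q \<and> \<not> D Q" using within_binder_body[OF B bind] by (auto simp: D_def)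
    next
      fix Q assume "Q \<in> exits (V'(Z := procs TS - W)) \<psi>"
      then have "Q \<in> ?X \<or> D Q" using exits_binder_body[OF B, of Q V'] by (auto simp: D_def)
      moreover have "wins ?X (Nu Z \<psi>) Q (st Q)" if "D Q"
      proof -
        obtain H'' where "Q = (H'', FVar Z)" "H'' \<in> W" using \<open>D Q\<close> by (cases Q) (auto simp: D_def)
        then have "\<exists>\<sigma>. wins ?X (Nu Z \<psi>) Q \<sigma>" by (simp add: W_def)
        then show ?thesis unfolding st_def by (rule someI_ex)
      qed
      ultimately show "Q \<in> ?X \<or> (D Q \<and> wins ?X (Nu Z \<psi>) Q (st Q))" by blast
    qed
    have moves: "moves TS \<phi> (H', FVar Z) = {(H', \<psi>)}" using moves_bound_var bind by blast
    have "\<exists>\<sigma>. wins ?X (Nu Z \<psi>) (H', FVar Z) \<sigma>"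
    proof (rule wins_eve_step)
      fix Q assume "Q \<in> moves TS \<phi> (H', FVar Z)"
      then have "Q = (H', \<psi>)" unfolding moves by simp
      with switched show "\<exists>\<sigma>. wins ?X (Nu Z \<psi>) Q \<sigma>" by blast
    qed (simp_all add: moves del: moves.simps)
    then show "H' \<in> W" using H' unfolding W_def by blast
  qed
  moreover have "W \<subseteq> procs TS" unfolding W_def by blast
  ultimately have "H \<in> W" using sem_Nu_complement_least[OF H] by blast
  then show ?thesis unfolding W_def by blast
qed

lemma procs_successor:
  assumes "(R, t) \<in> procs TS" "r \<in> R"
  shows "(outs TS (tgt r), Some r) \<in> procs TS"
proof -
  have "R \<subseteq> Tr TS" using assms(1) unfolding procs_def XX_def sqsub_def outs_def by auto
  with assms(2) have "r \<in> Tr TS" by auto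
  then have "tgt r \<in> St TS" using tsi unfolding is_tsi_def tgt_def by auto
  with \<open>r \<in> Tr TS\<close> show ?thesis unfolding procs_def XX_def AA_def by auto
qed

lemma procs_support: "(R, t) \<in> procs TS \<Longrightarrow> M \<in> XX TS \<Longrightarrow> (M, t) \<in> procs TS"
  unfolding procs_def by auto

lemma refutation_eve_step:
  assumes "operands \<chi> \<noteq> {}" "\<not> adam_pos (H, \<chi>)" "H \<in> procs TS" "H \<notin> sem TS V' \<chi>"
    and "Q \<in> moves TS \<phi> (H, \<chi>)"
  shows "snd Q \<in> operands \<chi> \<and> fst Q \<in> procs TS \<and> fst Q \<notin> sem TS V' (snd Q)"
proof -
  obtain R t where H: "H = (R, t)" by fastforce
  show ?thesis
    using assms unfolding H by (cases \<chi>) (auto intro: procs_successor procs_support)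
qed

lemma refutation_adam_step:
  assumes "operands \<chi> \<noteq> {}" "adam_pos (H, \<chi>)" "H \<in> procs TS" "H \<notin> sem TS V' \<chi>"
  shows "\<exists>Q \<in> moves TS \<phi> (H, \<chi>). snd Q \<in> operands \<chi> \<and> fst Q \<in> procs TS \<and> fst Q \<notin> sem TS V' (snd Q)"
proof -
  obtain R t where H: "H = (R, t)" by fastforce
  show ?thesis
    using assms unfolding H by (cases \<chi>) (fastforce intro: procs_successor procs_support)+
qed

lemma eve_terminal:
  "operands \<chi> \<noteq> {} \<Longrightarrow> \<not> adam_pos (H, \<chi>) \<Longrightarrow> moves TS \<phi> (H, \<chi>) = {} \<Longrightarrow> adam_wins_end V (H, \<chi>)"
  by (cases \<chi>) auto

lemma sem_Mu_prefixed_sub: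
  assumes "Mu Z \<beta> \<in> sub \<phi>"
  shows "sem TS (V'(Z := sem TS V' (Mu Z \<beta>))) \<beta> \<subseteq> sem TS V' (Mu Z \<beta>)"
proof (rule sem_Mu_prefixed)
  show "\<forall>\<chi>. FNeg \<chi> \<in> sub \<beta> \<longrightarrow> (\<exists>Y. \<chi> = FVar Y)"
    using pnf_negations sub_trans[of _ \<beta> "Mu Z \<beta>"] sub_trans[OF _ assms] by auto
  show "FNeg (FVar Z) \<notin> sub \<beta>" using pnf_positive assms by blast
qed

lemma wins_binder_step:
  assumes "B \<in> {Mu Z \<psi>, Nu Z \<psi>}" "\<exists>\<sigma>. wins X B (H, FVar Z) \<sigma>"
  shows "\<exists>\<sigma>. wins X B (H, B) \<sigma>"
  using assms by (intro wins_eve_step[of B "(H, B)" X]) (auto simp: within_def)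

definition admissible :: "('v \<Rightarrow> ('s,'a) proc set) \<Rightarrow> bool" where
  "admissible V' \<longleftrightarrow> (\<forall>Y. V' Y \<subseteq> procs TS) \<and> (\<forall>Y. Y \<notin> set (bvars \<phi>) \<longrightarrow> V' Y = V Y)"

lemma admissible_update:
  "admissible V' \<Longrightarrow> binds \<phi> Z \<beta> \<Longrightarrow> S \<subseteq> procs TS \<Longrightarrow> admissible (V'(Z := S))"
  using binds_in_bvars[of Z \<beta> \<phi>] unfolding admissible_def by auto

lemma refutation_wins:
  assumes "\<psi> \<in> sub \<phi>" "admissible V'" "H \<in> procs TS" "H \<notin> sem TS V' \<psi>"
  shows "\<exists>\<sigma>. wins (exits V' \<psi>) \<psi> (H, \<psi>) \<sigma>"
  using assms
proof (induction \<psi> arbitrary: V' H rule: measure_induct_rule[where f = size])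
  case (less \<psi>)
  note sub = less.prems(1) and V' = less.prems(2) and H = less.prems(3,4)
  consider (var) Y where "\<psi> = FVar Y" | (neg) \<chi> where "\<psi> = FNeg \<chi>" | (mu) Z \<beta> where "\<psi> = Mu Z \<beta>"
    | (nu) Z \<beta> where "\<psi> = Nu Z \<beta>" | (op) "operands \<psi> \<noteq> {}"
    by (cases \<psi>) auto
  then show ?case
  proof cases
    case var
    then have "(H, \<psi>) \<in> exits V' \<psi>" using H by (cases H) (simp add: exits_def)
    then show ?thesis using wins_exit by blast
  next
    case neg
    then obtain Y where Y: "\<chi> = FVar Y" using pnf_negations sub by blast
    then have "H \<in> V Y" using negated_var_free sub neg V' H by (auto simp: admissible_def)
    then show ?thesis using neg Y by (intro exI wins_terminal) (simp_all add: within_def)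
  next
    case mu
    define L where "L = sem TS V' (Mu Z \<beta>)"
    have "L \<subseteq> procs TS"
      unfolding L_def by (rule sem_subset_procs) (use V' in \<open>simp add: admissible_def\<close>)
    then have admissible: "admissible (V'(Z := L))" using admissible_update[OF V', of Z \<beta>] sub mu by simp
    have prefixed: "sem TS (V'(Z := L)) \<beta> \<subseteq> L"
      using sem_Mu_prefixed_sub[OF sub[unfolded mu]] unfolding L_def .
    have "\<beta> \<in> sub \<phi>" "size \<beta> < size \<psi>" using sub_trans[of \<beta> \<psi>] sub mu by simp_all
    then have "\<exists>\<sigma>. wins (exits (V'(Z := L)) \<beta>) \<beta> (H', \<beta>) \<sigma>" if "H' \<in> procs TS - L" for H'
      using less.IH[of \<beta> "V'(Z := L)" H'] admissible that prefixed by blast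
    moreover have "H \<in> procs TS - L" using H mu unfolding L_def by blast
    ultimately show ?thesis using wins_binder_step wins_Mu_var[of Z \<beta> L V' H] sub mu by simp
  next
    case nu
    have "\<beta> \<in> sub \<phi>" "size \<beta> < size \<psi>" using sub_trans[of \<beta> \<psi>] sub nu by simp_all
    moreover have "admissible (V'(Z := S))" if "S \<subseteq> procs TS" for S
      using admissible_update[OF V', of Z \<beta>] sub nu that by simp
    ultimately have "\<exists>\<sigma>. wins (exits (V'(Z := S)) \<beta>) \<beta> (H', \<beta>) \<sigma>"
      if "S \<subseteq> procs TS" "H' \<in> procs TS - sem TS (V'(Z := S)) \<beta>" for S H'
      using less.IH[of \<beta> "V'(Z := S)" H'] that by blast
    then show ?thesis using wins_binder_step wins_Nu_var[of Z \<beta> V' H] sub H nu by simp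
  next
    case op
    have within: "within \<psi> (H, \<psi>)" using op by (intro within_self) auto
    have IH: "\<exists>\<sigma>. wins (exits V' \<psi>) \<psi> Q \<sigma>"
      if Q: "snd Q \<in> operands \<psi>" "fst Q \<in> procs TS" "fst Q \<notin> sem TS V' (snd Q)" for Q
    proof -
      have "snd Q \<in> sub \<phi>" using sub_trans[OF operands_sub[OF Q(1)] sub] .
      then obtain \<sigma> where "wins (exits V' (snd Q)) (snd Q) (fst Q, snd Q) \<sigma>"
        using less.IH[OF size_operands[OF Q(1)] _ V' Q(2,3)] by blast
      then have "wins (exits V' \<psi>) \<psi> (fst Q, snd Q) \<sigma>" by (rule wins_operand[OF _ Q(1)])
      then show ?thesis unfolding prod.collapse by blast
    qed
    show ?thesis
    proof (cases "adam_pos (H, \<psi>)")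
      case True
      then show ?thesis
        using refutation_adam_step[OF op True H] IH wins_adam_step[OF within True] by blast
    next
      case False
      then show ?thesis
        using refutation_eve_step[OF op False H] IH eve_terminal[OF op False]
        by (intro wins_eve_step[OF within False]) auto
    qed
  qed
qed

lemma exits_terminal: "Q \<in> exits V \<phi> \<Longrightarrow> moves TS \<phi> Q = {} \<and> adam_wins_end V Q"
  using pnf binds_in_bvars unfolding exits_def pnf_def by fastforce

definition legal :: "('s,'a,'v) strategy \<Rightarrow> ('s,'a,'v) strategy" where
  "legal \<sigma> h = (if \<sigma> h \<in> moves TS \<phi> (last h) then \<sigma> h else (SOME Q. Q \<in> moves TS \<phi> (last h)))"

lemma adam_strategy_legal: "adam_strategy TS \<phi> (legal \<sigma>)"
  unfolding adam_strategy_def legal_def by (auto intro: someI_ex)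

lemma play_prefix_finite_play:
  assumes "finite_play TS H\<^sub>0 \<phi> (legal \<sigma>) ps"
  shows "play_prefix \<sigma> (H\<^sub>0, \<phi>) (\<lambda>i. ps ! i) (length ps - 1)"
  unfolding play_prefix_def
proof (intro conjI allI impI)
  show "ps ! 0 = (H\<^sub>0, \<phi>)" using assms hd_conv_nth unfolding finite_play_def by metis
next
  fix i assume "i < length ps - 1"
  then have i: "Suc i < length ps" by simp
  then show "ps ! Suc i \<in> moves TS \<phi> (ps ! i)" using assms unfolding finite_play_def by blast
  have take: "take (Suc i) ps = map (\<lambda>i. ps ! i) [0..<Suc i]"
    using i by (intro nth_equalityI) (auto simp del: upt_Suc)
  assume adam: "adam_pos (ps ! i) \<and> \<sigma> (map (\<lambda>i. ps ! i) [0..<Suc i]) \<in> moves TS \<phi> (ps ! i)"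
  then have "ps ! Suc i = legal \<sigma> (take (Suc i) ps)" using assms i unfolding finite_play_def by blast
  with adam show "ps ! Suc i = \<sigma> (map (\<lambda>i. ps ! i) [0..<Suc i])"
    by (simp only: legal_def take last_map_upt_Suc if_True)
qed

lemma play_prefix_infinite_play:
  assumes "infinite_play TS H\<^sub>0 \<phi> (legal \<sigma>) p"
  shows "play_prefix \<sigma> (H\<^sub>0, \<phi>) p n"
  using assms unfolding infinite_play_def play_prefix_def legal_def
  by (auto simp: last_map_upt_Suc simp del: upt_Suc)

lemma adam_has_winning_strategy_if_wins:
  assumes wins: "wins (exits V \<phi>) \<phi> (H\<^sub>0, \<phi>) \<sigma>"
  shows "adam_has_winning_strategy TS V H\<^sub>0 \<phi>"
  unfolding adam_has_winning_strategy_def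
proof (intro exI conjI allI impI)
  show "adam_strategy TS \<phi> (legal \<sigma>)" by (rule adam_strategy_legal)
next
  fix ps assume play: "finite_play TS H\<^sub>0 \<phi> (legal \<sigma>) ps"
  let ?n = "length ps - 1"
  have last: "last ps = ps ! ?n" using play by (simp add: finite_play_def last_conv_nth)
  have prefix: "play_prefix \<sigma> (H\<^sub>0, \<phi>) (\<lambda>i. ps ! i) ?n" by (rule play_prefix_finite_play[OF play])
  have "moves TS \<phi> (ps ! ?n) = {}" using play last by (simp add: finite_play_def)
  with winsD_prefix[OF wins prefix] consider i where "i \<le> ?n" "ps ! i \<in> exits V \<phi>"
    | "adam_wins_end V (ps ! ?n)"
    by blast
  then show "adam_wins_end V (last ps)"
  proof cases
    case 1
    have "moves TS \<phi> (ps ! i) = {}" using exits_terminal 1(2) by blast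
    then have "\<not> i < ?n" using play_prefix_move[OF prefix, of i] by auto
    with 1(1) have "i = ?n" by simp
    then show ?thesis using 1 exits_terminal last by simp
  qed (simp add: last)
next
  fix p assume "infinite_play TS H\<^sub>0 \<phi> (legal \<sigma>) p"
  then have prefix: "\<And>n. play_prefix \<sigma> (H\<^sub>0, \<phi>) p n" by (rule play_prefix_infinite_play)
  have no_exit: "p i \<notin> exits V \<phi>" for i
  proof
    assume "p i \<in> exits V \<phi>"
    with exits_terminal have "moves TS \<phi> (p i) = {}" by blast
    moreover have "p (Suc i) \<in> moves TS \<phi> (p i)" by (rule play_prefix_move[OF prefix lessI])
    ultimately show False by simp
  qed
  have "(\<exists>i. p i \<in> exits V \<phi>) \<or> adam_wins_inf \<phi> p" by (rule winsD_play[OF wins prefix])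
  moreover have "\<not> (\<exists>i. p i \<in> exits V \<phi>)" using no_exit by simp
  ultimately show "adam_wins_inf \<phi> p" by (simp only: simp_thms)
qed

lemma admissible_V: "admissible V"
  using V_procs by (simp add: admissible_def)

lemma init_proc_procs: "init_proc TS \<in> procs TS"
  using tsi unfolding init_proc_def procs_def XX_def AA_def is_tsi_def by auto

end

theorem theorem6:
  fixes TS :: "('s,'a) tsi"
    and V :: "'v \<Rightarrow> ('s,'a) proc set"
    and \<phi> :: "('a,'v) tfl"
  assumes "is_tsi TS"
    and "image_finite TS"
    and "\<forall>Z. V Z \<subseteq> procs TS"
    and "pnf \<phi>"
    and "init_proc TS \<notin> sem TS V \<phi>"
  shows "adam_has_winning_strategy TS V (init_proc TS) \<phi>"
proof -
  interpret tfl_game TS V \<phi> using assms(1,3,4) by unfold_locales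
  obtain \<sigma> where "wins (exits V \<phi>) \<phi> (init_proc TS, \<phi>) \<sigma>"
    using refutation_wins[OF sub_refl admissible_V init_proc_procs assms(5)] by blast
  then show ?thesis by (rule adam_has_winning_strategy_if_wins)
qed

end
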